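(* Let $\nu\in\mathbb{R}$ with $|\nu|<1$. Then all zeros of the entire function $z\mapsto{}_1F_2\!\left(1;\frac{3-\nu}{2},\frac{3+\nu}{2};z\right)$ are real, negative and simple, and each of them lies in one of the intervals $$\left[-\frac{\pi^2(k+1)^2}{4},\,-\frac{\pi^2k^2}{4}\right],\qquad k=1,2,\ldots$$
   Context: ${}_1F_2(a_1;b_1,b_2;x)=\sum_{n\ge0}\frac{(a_1)_n}{(b_1)_n(b_2)_n}\frac{x^n}{n!}$ is the generalized hypergeometric series. *)

theory Defs
  imports "HOL-Complex_Analysis.Complex_Analysis"
begin

definition hyp1F2 :: "complex \<Rightarrow> complex \<Rightarrow> complex \<Rightarrow> complex \<Rightarrow> complex" where
  "hyp1F2 a1 b1 b2 x =
     (\<Sum>n. pochhammer a1 n / (pochhammer b1 n * pochhammer b2 n) * x ^ n / of_nat (fact n))"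

end

theory Submission
  imports Defs "HOL-Computational_Algebra.Fundamental_Theorem_Algebra"
begin

text \<open>Following Polya, put \<open>z = - w\<^sup>2 / 4\<close>. Expanding the sine and integrating termwise shows that
  the integral of \<open>cos (\<nu> \<theta>) sin (w cos \<theta>)\<close> over \<open>[0, \<pi> / 2]\<close> equals
  \<open>cos (\<nu> \<pi> / 2) / (1 - \<nu>\<^sup>2) \<cdot> w F (- w\<^sup>2 / 4)\<close>. For any weight \<open>\<omega>\<close> with \<open>\<omega> / sin\<close>
  nonincreasing, the Riemann sums of the integral of \<open>\<omega> (\<theta>) sin (w cos \<theta>)\<close> at the nodes
  \<open>arccos ((N - k) / N)\<close> are sine polynomials \<open>\<Sum> a\<^sub>j sin (j w / N)\<close> with positive nondecreasing
  coefficients. The Enestrom--Kakeya theorem together with Cohn's reflection inequality, applied at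
  \<open>u = exp (i w / N)\<close>, shows that these have only real zeros, and Hurwitz's theorem passes this on to
  the integral. The integral is positive for \<open>0 < w \<le> \<pi>\<close>, which places the zeros below \<open>- \<pi>\<^sup>2 / 4\<close>.
  By the differential equation of \<open>F\<close>, a double zero would be a local minimum of \<open>F\<close> on the real
  axis; a small admissible perturbation of the weight then makes the integral positive near that
  zero, although by Hurwitz's theorem some zero must survive nearby.\<close>

section \<open>Sine polynomials with nondecreasing coefficients\<close>

lemma norm_one_minus_mult_le_norm_cnj_diff:
  fixes u r :: complex
  assumes "1 \<le> norm u" "norm r \<le> 1"
  shows "norm (1 - r * u) \<le> norm (cnj u - r)"
proof -
  \<comment> \<open>The difference of the squared norms factors as \<open>(\<bar>u\<bar>\<^sup>2 - 1)(1 - \<bar>r\<bar>\<^sup>2)\<close>.\<close>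
  have eq: "complex_of_real ((norm (cnj u - r))\<^sup>2 - (norm (1 - r * u))\<^sup>2)
      = complex_of_real (((norm u)\<^sup>2 - 1) * (1 - (norm r)\<^sup>2))"
    unfolding of_real_diff of_real_mult complex_norm_square of_real_1
    by (simp add: algebra_simps)
  have "0 \<le> ((norm u)\<^sup>2 - 1) * (1 - (norm r)\<^sup>2)"
    using assms by (intro mult_nonneg_nonneg) (simp_all add: one_le_power power_le_one)
  then have "(norm (1 - r * u))\<^sup>2 \<le> (norm (cnj u - r))\<^sup>2"
    using eq of_real_eq_iff by (smt (verit))
  then show ?thesis by (simp add: power2_le_iff_abs_le)
qed

lemma norm_reflected_poly_le:
  fixes p :: "complex poly"
  assumes "\<And>r. poly p r = 0 \<Longrightarrow> norm r \<le> 1" "1 \<le> norm u"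
  shows "norm (u ^ degree p * poly p (1 / u)) \<le> norm (poly p (cnj u))"
  using assms(1)
proof (induction "degree p" arbitrary: p)
  case 0
  then obtain c where "p = [:c:]" by (metis degree_eq_zeroE)
  then show ?case by simp
next
  case (Suc n)
  have "\<not> constant (poly p)" using Suc(2) by (simp add: constant_degree)
  then obtain r where r: "poly p r = 0" using fundamental_theorem_of_algebra by blast
  then obtain q where pq: "p = [:-r, 1:] * q" by (meson dvd_def poly_eq_0_iff_dvd)
  have "q \<noteq> 0" using pq Suc(2) by auto
  then have dq: "degree q = n" using Suc(2) pq degree_mult_eq[of "[:-r, 1:]" q] by simp
  have IH: "norm (u ^ n * poly q (1 / u)) \<le> norm (poly q (cnj u))"
    using Suc(1)[of q] Suc(3) dq pq by simp
  have "u \<noteq> 0" using assms(2) by auto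
  have "u ^ degree p * poly p (1 / u) = u ^ Suc n * ((1 / u - r) * poly q (1 / u))"
    using Suc(2) by (simp add: pq algebra_simps)
  also have "\<dots> = (1 - r * u) * (u ^ n * poly q (1 / u))"
    using \<open>u \<noteq> 0\<close> by (simp add: algebra_simps)
  finally have "u ^ degree p * poly p (1 / u) = (1 - r * u) * (u ^ n * poly q (1 / u))" .
  moreover have "poly p (cnj u) = (cnj u - r) * poly q (cnj u)"
    by (simp add: pq algebra_simps)
  moreover have "norm (1 - r * u) \<le> norm (cnj u - r)"
    using norm_one_minus_mult_le_norm_cnj_diff assms(2) Suc(3) r by blast
  ultimately show ?case
    using IH by (simp add: norm_mult mult_mono)
qed

lemma enestrom_kakeya:
  fixes a :: "nat \<Rightarrow> real" and u :: complex
  assumes a0: "0 < a 0" and mono: "\<And>j. j < m \<Longrightarrow> a j \<le> a (Suc j)" and u: "1 < norm u"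
  shows "(\<Sum>j\<le>m. of_real (a j) * u ^ j) \<noteq> 0"
proof
  assume zero: "(\<Sum>j\<le>m. of_real (a j) * u ^ j) = 0"
  have "(u - 1) * (\<Sum>j\<le>m. of_real (a j) * u ^ j) =
      of_real (a m) * u ^ Suc m - of_real (a 0) - (\<Sum>j<m. of_real (a (Suc j) - a j) * u ^ Suc j)"
    by (induction m) (simp_all add: algebra_simps)
  with zero have eq: "of_real (a m) * u ^ Suc m =
      of_real (a 0) + (\<Sum>j<m. of_real (a (Suc j) - a j) * u ^ Suc j)"
    by (simp add: algebra_simps)
  have tel: "(\<Sum>j<m. a (Suc j) - a j) = a m - a 0" by (rule sum_lessThan_telescope)
  have "0 \<le> (\<Sum>j<m. a (Suc j) - a j)" using mono by (intro sum_nonneg) auto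
  with tel a0 have am: "0 < a m" by simp
  have "a m * norm u ^ Suc m = norm (of_real (a m) * u ^ Suc m)"
    using am by (simp add: norm_mult norm_power)
  also have "\<dots> \<le> a 0 + (\<Sum>j<m. (a (Suc j) - a j) * norm u ^ Suc j)"
    unfolding eq using a0 mono
    by (intro order_trans[OF norm_triangle_ineq] add_mono order_trans[OF norm_sum] sum_mono)
       (simp_all add: norm_mult norm_power flip: of_real_diff)
  also have "\<dots> \<le> a 0 * norm u ^ m + (\<Sum>j<m. (a (Suc j) - a j) * norm u ^ m)"
    using a0 mono u
    by (intro add_mono sum_mono mult_left_mono power_increasing) (simp_all add: one_le_power)
  also have "\<dots> = a m * norm u ^ m"
    by (simp only: tel flip: sum_distrib_right) (simp add: algebra_simps)
  finally have "norm u * norm u ^ m \<le> 1 * norm u ^ m" using am by simp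
  moreover have "0 < norm u ^ m" using u by (intro zero_less_power) linarith
  ultimately show False using u mult_le_cancel_right[of "norm u" "norm u ^ m" 1] by linarith
qed

lemma sine_sum_eq_exp:
  fixes a :: "nat \<Rightarrow> real" and h :: real and w :: complex
  defines "u \<equiv> exp (\<i> * of_real h * w)"
  shows "(\<Sum>j\<le>m. of_real (a j) * sin (of_real (h * real (Suc j)) * w)) =
    (u * (\<Sum>j\<le>m. of_real (a j) * u ^ j) - (1 / u) * (\<Sum>j\<le>m. of_real (a j) * (1 / u) ^ j)) / (2 * \<i>)"
proof -
  have sin_eq: "sin (of_real (h * real (Suc j)) * w) = (u ^ Suc j - (1 / u) ^ Suc j) / (2 * \<i>)" for j
  proof -
    have "exp (\<i> * (of_real (h * real (Suc j)) * w)) = u ^ Suc j"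
      unfolding u_def exp_of_nat_mult[symmetric] by (simp add: algebra_simps)
    then show ?thesis
      unfolding sin_exp_eq exp_minus by (simp add: power_one_over inverse_eq_divide)
  qed
  have "(\<Sum>j\<le>m. of_real (a j) * sin (of_real (h * real (Suc j)) * w))
      = ((\<Sum>j\<le>m. of_real (a j) * u ^ Suc j) - (\<Sum>j\<le>m. of_real (a j) * (1 / u) ^ Suc j)) / (2 * \<i>)"
    unfolding sin_eq sum_subtractf[symmetric] sum_divide_distrib
    by (intro sum.cong refl) (simp add: right_diff_distrib)
  then show ?thesis
    by (simp add: sum_distrib_left algebra_simps)
qed

lemma norm_reflected_nondecreasing_sum_le:
  fixes a :: "nat \<Rightarrow> real" and u :: complex
  assumes a0: "0 < a 0" and mono: "\<And>j. j < m \<Longrightarrow> a j \<le> a (Suc j)" and u: "1 < norm u"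
  shows "norm u ^ m * norm (\<Sum>j\<le>m. of_real (a j) * (1 / u) ^ j) \<le> norm (\<Sum>j\<le>m. of_real (a j) * u ^ j)"
proof -
  define p where "p = (\<Sum>j\<le>m. monom (complex_of_real (a j)) j)"
  have poly_p: "poly p x = (\<Sum>j\<le>m. of_real (a j) * x ^ j)" for x
    unfolding p_def by (simp add: poly_sum poly_monom)
  have "a 0 \<le> a j" if "j \<le> m" for j
    using that by (induction j) (auto intro: order_trans[OF _ mono])
  with a0 have "0 < a m" by fastforce
  then have "coeff p m \<noteq> 0" unfolding p_def by (simp add: coeff_sum)
  moreover have "degree p \<le> m" unfolding p_def
    by (intro degree_sum_le) (auto intro: order_trans[OF degree_monom_le])
  ultimately have deg: "degree p = m" using le_degree[of p m] by linarith
  have "norm r \<le> 1" if "poly p r = 0" for r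
    using enestrom_kakeya[where m=m and u=r, OF a0 mono] that poly_p by force
  then have "norm (u ^ m * poly p (1 / u)) \<le> norm (poly p (cnj u))"
    using norm_reflected_poly_le[of p u] u deg by simp
  moreover have "poly p (cnj u) = cnj (poly p u)" by (simp add: poly_p)
  ultimately show ?thesis by (simp only: poly_p complex_mod_cnj norm_mult norm_power)
qed

lemma sine_sum_nonzero_lower_half_plane:
  fixes a :: "nat \<Rightarrow> real" and h :: real and w :: complex
  assumes a0: "0 < a 0" and mono: "\<And>j. j < m \<Longrightarrow> a j \<le> a (Suc j)" and h: "0 < h"
    and w: "Im w < 0"
  shows "(\<Sum>j\<le>m. of_real (a j) * sin (of_real (h * real (Suc j)) * w)) \<noteq> 0"
proof
  assume "(\<Sum>j\<le>m. of_real (a j) * sin (of_real (h * real (Suc j)) * w)) = 0"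
  define u where "u = exp (\<i> * of_real h * w)"
  define R where "R x = (\<Sum>j\<le>m. of_real (a j) * x ^ j)" for x :: complex
  have u: "1 < norm u" unfolding u_def using h w by (simp add: mult_pos_neg)
  \<comment> \<open>Reflection bounds \<open>\<bar>R (1/u)\<bar>\<close> by \<open>\<bar>R u\<bar> / \<bar>u\<bar>\<^sup>m\<close>, so this identity forces \<open>\<bar>u\<bar>\<^sup>m\<^sup>+\<^sup>2 \<le> 1\<close>.\<close>
  have "u * R u = (1 / u) * R (1 / u)"
    using \<open>(\<Sum>j\<le>m. _) = 0\<close> unfolding sine_sum_eq_exp u_def[symmetric] R_def by simp
  then have "norm u * norm (R u) = norm (R (1 / u)) / norm u"
    by (metis norm_mult norm_divide norm_one mult.commute times_divide_eq_left mult_1)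
  also have "\<dots> \<le> norm (R u) / norm u ^ m / norm u"
  proof -
    have "norm u ^ m * norm (R (1 / u)) \<le> norm (R u)"
      unfolding R_def by (rule norm_reflected_nondecreasing_sum_le[where m=m, OF a0 mono u])
    moreover have "0 < norm u ^ m" using u by (intro zero_less_power) linarith
    ultimately show ?thesis
      using u by (intro divide_right_mono) (simp_all add: pos_le_divide_eq mult.commute)
  qed
  also have "\<dots> = norm (R u) / norm u ^ Suc m" by (simp add: mult.commute)
  finally have "norm u * norm (R u) \<le> norm (R u) / norm u ^ Suc m" .
  moreover have "0 < norm u ^ Suc m" using u by (intro zero_less_power) linarith
  ultimately have "norm u * norm (R u) * norm u ^ Suc m \<le> norm (R u)"
    by (simp only: pos_le_divide_eq)
  then have "norm u ^ Suc (Suc m) * norm (R u) \<le> 1 * norm (R u)"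
    by (simp add: algebra_simps)
  moreover have "0 < norm (R u)" using enestrom_kakeya[where m=m, OF a0 mono u] by (simp add: R_def)
  ultimately have "norm u ^ Suc (Suc m) \<le> 1" by (simp only: mult_le_cancel_right)
  with u show False by (metis less_1_mult one_less_power not_le zero_less_Suc)
qed

lemma sine_sum_zero_imp_real:
  fixes a :: "nat \<Rightarrow> real" and h :: real and w :: complex
  assumes a0: "0 < a 0" and mono: "\<And>j. j < m \<Longrightarrow> a j \<le> a (Suc j)" and h: "0 < h"
    and zero: "(\<Sum>j\<le>m. of_real (a j) * sin (of_real (h * real (Suc j)) * w)) = 0"
  shows "Im w = 0"
proof (rule ccontr)
  assume "Im w \<noteq> 0"
  then consider "Im w < 0" | "Im (- w) < 0" by fastforce
  then show False
  proof cases
    case 1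
    then show ?thesis using sine_sum_nonzero_lower_half_plane[OF a0 mono h] zero by blast
  next
    case 2
    have "(\<Sum>j\<le>m. of_real (a j) * sin (of_real (h * real (Suc j)) * (- w))) = 0"
      using zero by (simp only: mult_minus_right sin_minus sum_negf minus_zero)
    then show ?thesis using sine_sum_nonzero_lower_half_plane[OF a0 mono h 2] by blast
  qed
qed

section \<open>Polya's integral\<close>

definition polya_weight :: "(real \<Rightarrow> real) \<Rightarrow> bool" where
  "polya_weight \<omega> \<longleftrightarrow> continuous_on {0..pi/2} \<omega> \<and> 0 \<le> \<omega> 0 \<and> 0 < \<omega> (pi/2) \<and>
     (\<forall>a b. 0 < a \<longrightarrow> a \<le> b \<longrightarrow> b \<le> pi/2 \<longrightarrow> \<omega> b / sin b \<le> \<omega> a / sin a)"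

definition polya_integral :: "(real \<Rightarrow> real) \<Rightarrow> complex \<Rightarrow> complex" where
  "polya_integral \<omega> w = integral {0..pi/2} (\<lambda>\<theta>. of_real (\<omega> \<theta>) * sin (w * of_real (cos \<theta>)))"

text \<open>Riemann sums of \<^const>\<open>polya_integral\<close> at the nodes \<open>arccos ((N - k) / N)\<close>: since the
  cosines of the nodes are equally spaced, they are sine polynomials in \<open>w / N\<close>.\<close>

definition arccos_node :: "nat \<Rightarrow> nat \<Rightarrow> real" where
  "arccos_node N k = arccos (real (N - k) / real N)"

definition node_mass :: "(real \<Rightarrow> real) \<Rightarrow> nat \<Rightarrow> nat \<Rightarrow> real" where
  "node_mass \<omega> N k = integral {arccos_node N k..arccos_node N (Suc k)} \<omega>"

definition polya_sum :: "(real \<Rightarrow> real) \<Rightarrow> nat \<Rightarrow> complex \<Rightarrow> complex" where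
  "polya_sum \<omega> N w = (\<Sum>k<N. of_real (node_mass \<omega> N k) * sin (w * of_real (real (N - k) / real N)))"

lemma integral_sum_consecutive_intervals:
  fixes f :: "real \<Rightarrow> 'a::banach"
  assumes mono: "\<And>k. k < N \<Longrightarrow> t k \<le> t (Suc k)" and f: "f integrable_on {t 0..t N}"
  shows "integral {t 0..t N} f = (\<Sum>k<N. integral {t k..t (Suc k)} f)"
  using assms
proof (induction N)
  case 0
  then show ?case by simp
next
  case (Suc N)
  have "t 0 \<le> t n" if "n \<le> N" for n
    using that by (induction n) (auto intro: order_trans[OF _ Suc.prems(1)])
  then have le: "t 0 \<le> t N" "t N \<le> t (Suc N)" using Suc.prems(1) by auto
  have "f integrable_on {t 0..t N}"
    using Suc.prems(2) by (rule integrable_subinterval_real) (use le in auto)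
  then have "integral {t 0..t N} f = (\<Sum>k<N. integral {t k..t (Suc k)} f)"
    using Suc.IH Suc.prems(1) by simp
  moreover have "integral {t 0..t (Suc N)} f = integral {t 0..t N} f + integral {t N..t (Suc N)} f"
    using Henstock_Kurzweil_Integration.integral_combine[OF le Suc.prems(2)] by simp
  ultimately show ?case by simp
qed

lemma integral_complex_of_real:
  fixes f :: "real \<Rightarrow> real"
  assumes "f integrable_on S"
  shows "integral S (\<lambda>x. complex_of_real (f x)) = of_real (integral S f)"
  using has_integral_of_real[OF integrable_integral[OF assms]] by (rule integral_unique)

lemma norm_sin_diff_le:
  fixes w :: complex
  assumes "\<bar>c\<bar> \<le> 1" "\<bar>d\<bar> \<le> 1"
  shows "norm (sin (w * of_real c) - sin (w * of_real d)) \<le> exp (norm w) * (norm w * \<bar>c - d\<bar>)"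
proof -
  have "norm (sin (w * of_real c) - sin (w * of_real d)) \<le> exp (norm w) * norm (w * of_real c - w * of_real d)"
  proof (rule field_differentiable_bound[where S="cball (0::complex) (norm w)" and f'=cos])
    show "(sin has_field_derivative cos z) (at z within cball 0 (norm w))" for z
      by (rule DERIV_sin[THEN has_field_derivative_at_within])
    show "norm (cos z) \<le> exp (norm w)" if "z \<in> cball 0 (norm w)" for z :: complex
      using that norm_cos_le[of z] by (simp add: order_trans)
    show "w * of_real c \<in> cball 0 (norm w)" "w * of_real d \<in> cball 0 (norm w)"
      using assms by (simp_all add: norm_mult mult_left_le)
  qed (rule convex_cball)
  also have "norm (w * of_real c - w * of_real d) = norm w * \<bar>c - d\<bar>"
    by (simp add: norm_mult flip: right_diff_distrib of_real_diff)
  finally show ?thesis .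
qed

lemma polya_weight_ge_sin:
  assumes "polya_weight \<omega>" "0 \<le> \<theta>" "\<theta> \<le> pi/2"
  shows "\<omega> (pi/2) * sin \<theta> \<le> \<omega> \<theta>"
proof (cases "\<theta> = 0")
  case True
  then show ?thesis using assms by (simp add: polya_weight_def)
next
  case False
  then have "0 < \<theta>" using assms by simp
  then have "0 < sin \<theta>" using assms by (intro sin_gt_zero) auto
  moreover have "\<omega> (pi/2) / sin (pi/2) \<le> \<omega> \<theta> / sin \<theta>"
    using assms \<open>0 < \<theta>\<close> unfolding polya_weight_def by blast
  ultimately show ?thesis by (simp add: pos_le_divide_eq mult.commute)
qed

lemma polya_weight_nonneg:
  assumes "polya_weight \<omega>" "0 \<le> \<theta>" "\<theta> \<le> pi/2"
  shows "0 \<le> \<omega> \<theta>"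
proof -
  have "0 \<le> sin \<theta>" using assms by (intro sin_ge_zero) auto
  moreover have "0 < \<omega> (pi/2)" using assms by (simp add: polya_weight_def)
  ultimately show ?thesis using polya_weight_ge_sin[OF assms] by (smt (verit) mult_nonneg_nonneg)
qed

lemma arccos_node_bounds:
  assumes "0 < N" "k \<le> N"
  shows "0 \<le> arccos_node N k" "arccos_node N k \<le> pi/2" "cos (arccos_node N k) = real (N - k) / real N"
proof -
  have "0 \<le> real (N - k) / real N" "real (N - k) / real N \<le> 1" using assms by auto
  then have y: "-1 \<le> real (N - k) / real N" "0 \<le> real (N - k) / real N" "real (N - k) / real N \<le> 1"
    by linarith+
  then show "0 \<le> arccos_node N k" "arccos_node N k \<le> pi/2" "cos (arccos_node N k) = real (N - k) / real N"
    unfolding arccos_node_def using arccos_lbound[OF y(1,3)] arccos_le_pi2[OF y(2,3)] cos_arccos[OF y(1,3)]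
    by auto
qed

lemma arccos_node_mono:
  assumes "0 < N" "k < N"
  shows "arccos_node N k \<le> arccos_node N (Suc k)"
proof -
  have "0 \<le> real (N - Suc k) / real N" "real (N - k) / real N \<le> 1" using assms by auto
  moreover have "real (N - Suc k) / real N \<le> real (N - k) / real N"
    using assms by (intro divide_right_mono) auto
  ultimately show ?thesis unfolding arccos_node_def by (intro arccos_le_arccos) linarith+
qed

lemma arccos_node_0 [simp]: "0 < N \<Longrightarrow> arccos_node N 0 = 0"
  by (simp add: arccos_node_def)

lemma arccos_node_last [simp]: "arccos_node N N = pi/2"
  by (simp add: arccos_node_def)

lemma arccos_node_interval_subset:
  assumes "0 < N" "k < N"
  shows "{arccos_node N k..arccos_node N (Suc k)} \<subseteq> {0..pi/2}"
  using arccos_node_bounds[OF assms(1), of k] arccos_node_bounds[OF assms(1), of "Suc k"] assms by auto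

lemma cos_arccos_node_interval:
  assumes "0 < N" "k < N" "\<theta> \<in> {arccos_node N k..arccos_node N (Suc k)}"
  shows "\<bar>cos \<theta> - real (N - k) / real N\<bar> \<le> 1 / real N"
proof -
  have nodes: "0 \<le> arccos_node N k" "arccos_node N (Suc k) \<le> pi/2"
    using arccos_node_bounds assms by auto
  have "cos \<theta> \<le> cos (arccos_node N k)" "cos (arccos_node N (Suc k)) \<le> cos \<theta>"
    using assms nodes by (auto intro: cos_monotone_0_pi_le)
  then have "cos \<theta> \<le> real (N - k) / real N" "real (N - Suc k) / real N \<le> cos \<theta>"
    using arccos_node_bounds assms by auto
  moreover have "real (N - k) / real N - real (N - Suc k) / real N = 1 / real N"
    using assms by (simp add: diff_divide_distrib[symmetric] of_nat_diff)
  ultimately show ?thesis by linarith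
qed

lemma integral_split_arccos_nodes:
  fixes f :: "real \<Rightarrow> 'a::banach"
  assumes "continuous_on {0..pi/2} f" "0 < N"
  shows "integral {0..pi/2} f = (\<Sum>k<N. integral {arccos_node N k..arccos_node N (Suc k)} f)"
proof -
  have "integral {arccos_node N 0..arccos_node N N} f =
      (\<Sum>k<N. integral {arccos_node N k..arccos_node N (Suc k)} f)"
    using assms by (intro integral_sum_consecutive_intervals arccos_node_mono integrable_continuous_interval) auto
  then show ?thesis using assms by simp
qed

lemma polya_integral_diff_polya_sum:
  assumes cont: "continuous_on {0..pi/2} \<omega>" and N: "0 < N"
  shows "polya_integral \<omega> w - polya_sum \<omega> N w = (\<Sum>k<N. integral {arccos_node N k..arccos_node N (Suc k)}
           (\<lambda>\<theta>. of_real (\<omega> \<theta>) * (sin (w * of_real (cos \<theta>)) - sin (w * of_real (real (N - k) / real N)))))"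
proof -
  define I where "I k = {arccos_node N k..arccos_node N (Suc k)}" for k
  define s where "s k = sin (w * of_real (real (N - k) / real N))" for k
  have int_I: "(\<lambda>\<theta>. of_real (\<omega> \<theta>) * f \<theta>) integrable_on I k"
    if "k < N" "continuous_on {0..pi/2} f" for k and f :: "real \<Rightarrow> complex"
    unfolding I_def using arccos_node_interval_subset[OF N \<open>k < N\<close>]
    by (intro integrable_continuous_interval continuous_intros continuous_on_subset[OF cont]
        continuous_on_subset[OF that(2)])
  have "polya_sum \<omega> N w = (\<Sum>k<N. integral (I k) (\<lambda>\<theta>. of_real (\<omega> \<theta>) * s k))"
    unfolding polya_sum_def
  proof (intro sum.cong refl)
    fix k assume "k \<in> {..<N}"
    then have "\<omega> integrable_on I k"
      unfolding I_def using arccos_node_interval_subset[OF N]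
      by (intro integrable_continuous_interval continuous_on_subset[OF cont]) auto
    then show "of_real (node_mass \<omega> N k) * sin (w * of_real (real (N - k) / real N)) =
        integral (I k) (\<lambda>\<theta>. of_real (\<omega> \<theta>) * s k)"
      unfolding node_mass_def I_def[symmetric] s_def by (simp add: integral_complex_of_real)
  qed
  moreover have "polya_integral \<omega> w = (\<Sum>k<N. integral (I k) (\<lambda>\<theta>. of_real (\<omega> \<theta>) * sin (w * of_real (cos \<theta>))))"
    unfolding polya_integral_def I_def using N by (intro integral_split_arccos_nodes continuous_intros cont)
  ultimately have "polya_integral \<omega> w - polya_sum \<omega> N w = (\<Sum>k<N. integral (I k)
      (\<lambda>\<theta>. of_real (\<omega> \<theta>) * sin (w * of_real (cos \<theta>))) - integral (I k) (\<lambda>\<theta>. of_real (\<omega> \<theta>) * s k))"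
    by (simp add: sum_subtractf)
  also have "\<dots> = (\<Sum>k<N. integral (I k) (\<lambda>\<theta>. of_real (\<omega> \<theta>) * (sin (w * of_real (cos \<theta>)) - s k)))"
    unfolding right_diff_distrib
  proof (intro sum.cong refl integral_diff[symmetric])
    fix k assume "k \<in> {..<N}"
    then show "(\<lambda>\<theta>. of_real (\<omega> \<theta>) * sin (w * of_real (cos \<theta>))) integrable_on I k"
      "(\<lambda>\<theta>. of_real (\<omega> \<theta>) * s k) integrable_on I k"
      by (auto intro!: int_I continuous_intros)
  qed
  finally show ?thesis unfolding I_def s_def .
qed

lemma norm_polya_integral_diff_polya_sum_le:
  assumes \<omega>: "polya_weight \<omega>" and N: "0 < N"
  shows "norm (polya_integral \<omega> w - polya_sum \<omega> N w) \<le> integral {0..pi/2} \<omega> * (exp (norm w) * (norm w / real N))"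
proof -
  define C where "C = exp (norm w) * (norm w / real N)"
  define I where "I k = {arccos_node N k..arccos_node N (Suc k)}" for k
  define q where "q k = real (N - k) / real N" for k
  have cont: "continuous_on {0..pi/2} \<omega>" using \<omega> by (simp add: polya_weight_def)
  have bound: "norm (integral (I k) (\<lambda>\<theta>. of_real (\<omega> \<theta>) * (sin (w * of_real (cos \<theta>)) - sin (w * of_real (q k)))))
      \<le> integral (I k) (\<lambda>\<theta>. \<omega> \<theta> * C)" if k: "k < N" for k
  proof (rule integral_norm_bound_integral)
    have sub: "I k \<subseteq> {0..pi/2}" unfolding I_def by (rule arccos_node_interval_subset[OF N k])
    show "(\<lambda>\<theta>. of_real (\<omega> \<theta>) * (sin (w * of_real (cos \<theta>)) - sin (w * of_real (q k)))) integrable_on I k"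
      "(\<lambda>\<theta>. \<omega> \<theta> * C) integrable_on I k"
      unfolding I_def using sub[unfolded I_def]
      by (auto intro!: integrable_continuous_interval continuous_intros continuous_on_subset[OF cont])
    fix \<theta> assume \<theta>: "\<theta> \<in> I k"
    have "0 \<le> \<omega> \<theta>" using polya_weight_nonneg[OF \<omega>] sub \<theta> by auto
    moreover have "norm (sin (w * of_real (cos \<theta>)) - sin (w * of_real (q k))) \<le> C"
    proof -
      have "\<bar>q k\<bar> \<le> 1" using k unfolding q_def by auto
      then have "norm (sin (w * of_real (cos \<theta>)) - sin (w * of_real (q k))) \<le>
          exp (norm w) * (norm w * \<bar>cos \<theta> - q k\<bar>)"
        by (intro norm_sin_diff_le) auto
      also have "\<dots> \<le> C"
        unfolding C_def q_def using cos_arccos_node_interval[OF N k \<theta>[unfolded I_def]]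
        by (intro mult_left_mono) (auto simp: divide_inverse intro!: mult_left_mono)
      finally show ?thesis .
    qed
    ultimately show "norm (of_real (\<omega> \<theta>) * (sin (w * of_real (cos \<theta>)) - sin (w * of_real (q k)))) \<le> \<omega> \<theta> * C"
      by (simp add: norm_mult mult_left_mono)
  qed
  have "norm (polya_integral \<omega> w - polya_sum \<omega> N w) \<le> (\<Sum>k<N. integral (I k) (\<lambda>\<theta>. \<omega> \<theta> * C))"
    unfolding polya_integral_diff_polya_sum[OF cont N] I_def[symmetric] q_def[symmetric]
    using bound by (intro order_trans[OF norm_sum] sum_mono) auto
  also have "\<dots> = integral {0..pi/2} (\<lambda>\<theta>. \<omega> \<theta> * C)"
    unfolding I_def using N by (intro integral_split_arccos_nodes[symmetric] continuous_intros cont)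
  finally show ?thesis unfolding C_def by simp
qed

text \<open>The substitution \<open>t = cos \<theta>\<close> turns \<^term>\<open>node_mass \<omega> N k\<close> into the integral of
  \<^term>\<open>weight_ratio \<omega>\<close> over \<open>[(N - k - 1) / N, (N - k) / N]\<close>; as \<^term>\<open>weight_ratio \<omega>\<close> is
  nondecreasing, the masses decrease with \<open>k\<close>. The mean value theorem replaces the substitution.\<close>

definition arccos_integral :: "(real \<Rightarrow> real) \<Rightarrow> real \<Rightarrow> real" where
  "arccos_integral \<omega> t = integral {0..arccos t} \<omega>"

definition weight_ratio :: "(real \<Rightarrow> real) \<Rightarrow> real \<Rightarrow> real" where
  "weight_ratio \<omega> t = \<omega> (arccos t) / sin (arccos t)"

lemma continuous_on_arccos_integral:
  assumes "continuous_on {0..pi/2} \<omega>"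
  shows "continuous_on {0..1} (arccos_integral \<omega>)"
proof -
  have c1: "continuous_on {0..pi/2} (\<lambda>x. integral {0..x} \<omega>)"
    by (rule indefinite_integral_continuous_1, rule integrable_continuous_interval[OF assms])
  have c2: "continuous_on {0..1} arccos"
    by (rule continuous_on_subset[OF continuous_on_arccos']) auto
  have "arccos ` {0..1} \<subseteq> {0..pi/2}"
  proof (rule image_subsetI)
    fix x :: real assume "x \<in> {0..1}"
    then show "arccos x \<in> {0..pi/2}" using arccos_lbound[of x] arccos_le_pi2[of x] by auto
  qed
  then show ?thesis unfolding arccos_integral_def
    using continuous_on_compose[OF c2 continuous_on_subset[OF c1]] by (simp add: o_def)
qed

lemma arccos_integral_has_derivative:
  assumes "continuous_on {0..pi/2} \<omega>" "0 < t" "t < 1"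
  shows "DERIV (arccos_integral \<omega>) t :> - weight_ratio \<omega> t"
proof -
  have ab: "0 < arccos t" "arccos t < pi/2"
    using arccos_lt_bounded[of t] assms arccos_less_arccos[of 0 t] by auto
  have "((\<lambda>x. integral {0..x} \<omega>) has_real_derivative \<omega> (arccos t)) (at (arccos t) within {0..pi/2})"
    by (rule integral_has_real_derivative[OF assms(1)]) (use ab in auto)
  then have d1: "((\<lambda>x. integral {0..x} \<omega>) has_real_derivative \<omega> (arccos t)) (at (arccos t))"
    using at_within_interior[of "arccos t" "{0..pi/2}"] ab by simp
  have d2: "DERIV arccos t :> inverse (- sqrt (1 - t\<^sup>2))"
    using assms by (intro DERIV_arccos) auto
  have "DERIV ((\<lambda>x. integral {0..x} \<omega>) \<circ> arccos) t :> \<omega> (arccos t) * inverse (- sqrt (1 - t\<^sup>2))"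
    by (rule DERIV_chain[OF d1 d2])
  moreover have "sin (arccos t) = sqrt (1 - t\<^sup>2)" using assms by (intro sin_arccos) auto
  ultimately show ?thesis unfolding arccos_integral_def weight_ratio_def by (simp add: o_def divide_inverse)
qed

lemma node_mass_eq_arccos_integral_diff:
  assumes "continuous_on {0..pi/2} \<omega>" "0 < N" "k < N"
  shows "node_mass \<omega> N k = arccos_integral \<omega> (real (N - Suc k) / real N) - arccos_integral \<omega> (real (N - k) / real N)"
proof -
  have a: "0 \<le> arccos_node N k" "arccos_node N k \<le> arccos_node N (Suc k)" "arccos_node N (Suc k) \<le> pi/2"
    using arccos_node_bounds[OF assms(2)] arccos_node_mono[OF assms(2,3)] assms by auto
  have int: "\<omega> integrable_on {0..arccos_node N (Suc k)}"
    by (rule integrable_continuous_interval, rule continuous_on_subset[OF assms(1)]) (use a in auto)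
  have "integral {0..arccos_node N k} \<omega> + integral {arccos_node N k..arccos_node N (Suc k)} \<omega> = integral {0..arccos_node N (Suc k)} \<omega>"
    by (rule Henstock_Kurzweil_Integration.integral_combine[OF a(1,2) int])
  then show ?thesis unfolding node_mass_def arccos_integral_def arccos_node_def by simp
qed

lemma node_mass_mean_value:
  assumes cont: "continuous_on {0..pi/2} \<omega>" and N: "0 < N" and k: "k < N"
  shows "\<exists>z. real (N - Suc k) / real N < z \<and> z < real (N - k) / real N \<and> node_mass \<omega> N k = weight_ratio \<omega> z / real N"
proof -
  define a where "a = real (N - Suc k) / real N"
  define b where "b = real (N - k) / real N"
  have ab: "b - a = 1 / real N" unfolding a_def b_def using k
    by (simp add: diff_divide_distrib[symmetric] of_nat_diff)
  have a0: "0 \<le> a" unfolding a_def by simp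
  have b1: "b \<le> 1" unfolding b_def using N by auto
  have "1 / real N > 0" using N by simp
  then have alb: "a < b" using ab by linarith
  obtain l z where z: "a < z" "z < b" "DERIV (arccos_integral \<omega>) z :> l" "arccos_integral \<omega> b - arccos_integral \<omega> a = (b - a) * l"
    using MVT[OF alb, of "arccos_integral \<omega>"] continuous_on_subset[OF continuous_on_arccos_integral[OF cont], of "{a..b}"] a0 b1
      arccos_integral_has_derivative[OF cont] real_differentiable_def
    by (smt (verit) atLeastAtMost_iff subsetI)
  have "l = - weight_ratio \<omega> z" using DERIV_unique[OF z(3) arccos_integral_has_derivative[OF cont]] z a0 b1 by simp
  then have "node_mass \<omega> N k = weight_ratio \<omega> z / real N"
    using node_mass_eq_arccos_integral_diff[OF cont N k] z(4) ab unfolding a_def[symmetric] b_def[symmetric] by simp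
  then show ?thesis using z unfolding a_def b_def by blast
qed

lemma weight_ratio_mono:
  assumes \<omega>: "polya_weight \<omega>" and "0 < x" "x \<le> y" "y < 1"
  shows "weight_ratio \<omega> x \<le> weight_ratio \<omega> y"
proof -
  have "0 < arccos y" using arccos_lt_bounded[of y] assms by auto
  moreover have "arccos y \<le> arccos x" using assms by (intro arccos_le_arccos) auto
  moreover have "arccos x \<le> pi/2" using assms by (intro arccos_le_pi2) auto
  ultimately show ?thesis using \<omega> unfolding polya_weight_def weight_ratio_def by blast
qed

lemma weight_ratio_ge:
  assumes \<omega>: "polya_weight \<omega>" and "0 < x" "x < 1"
  shows "\<omega> (pi/2) \<le> weight_ratio \<omega> x"
proof -
  have "0 < arccos x" using arccos_lt_bounded[of x] assms by auto
  moreover have "arccos x \<le> pi/2" using assms by (intro arccos_le_pi2) auto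
  ultimately have "\<omega> (pi/2) / sin (pi/2) \<le> weight_ratio \<omega> x"
    using \<omega> unfolding polya_weight_def weight_ratio_def by blast
  then show ?thesis by simp
qed

lemma node_mass_pos:
  assumes \<omega>: "polya_weight \<omega>" and N: "0 < N" and k: "k < N"
  shows "0 < node_mass \<omega> N k"
proof -
  have cont: "continuous_on {0..pi/2} \<omega>" using \<omega> by (simp add: polya_weight_def)
  obtain z where z: "real (N - Suc k) / real N < z" "z < real (N - k) / real N"
      "node_mass \<omega> N k = weight_ratio \<omega> z / real N"
    using node_mass_mean_value[OF cont N k] by blast
  have "0 \<le> real (N - Suc k) / real N" "real (N - k) / real N \<le> 1" using N by auto
  then have "0 < z" "z < 1" using z(1,2) by linarith+
  then have "\<omega> (pi/2) \<le> weight_ratio \<omega> z" by (rule weight_ratio_ge[OF \<omega>])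
  moreover have "0 < \<omega> (pi/2)" using \<omega> by (simp add: polya_weight_def)
  ultimately show ?thesis using N unfolding z(3) by simp
qed

lemma node_mass_antimono:
  assumes \<omega>: "polya_weight \<omega>" and N: "0 < N" and k: "Suc k < N"
  shows "node_mass \<omega> N (Suc k) \<le> node_mass \<omega> N k"
proof -
  have cont: "continuous_on {0..pi/2} \<omega>" using \<omega> by (simp add: polya_weight_def)
  obtain z1 where z1: "real (N - Suc (Suc k)) / real N < z1" "z1 < real (N - Suc k) / real N"
      "node_mass \<omega> N (Suc k) = weight_ratio \<omega> z1 / real N"
    using node_mass_mean_value[OF cont N k] by blast
  obtain z0 where z0: "real (N - Suc k) / real N < z0" "z0 < real (N - k) / real N"
      "node_mass \<omega> N k = weight_ratio \<omega> z0 / real N"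
    using node_mass_mean_value[OF cont N, of k] k by auto
  have "0 \<le> real (N - Suc (Suc k)) / real N" "real (N - k) / real N \<le> 1" using N by auto
  then have "0 < z1" "z1 \<le> z0" "z0 < 1" using z0(1,2) z1(1,2) by linarith+
  then have "weight_ratio \<omega> z1 \<le> weight_ratio \<omega> z0" by (rule weight_ratio_mono[OF \<omega>])
  then show ?thesis unfolding z0(3) z1(3) by (rule divide_right_mono) simp
qed

lemma polya_sum_eq_sine_sum:
  assumes "0 < N"
  shows "polya_sum \<omega> N w =
    (\<Sum>j<N. of_real (node_mass \<omega> N (N - Suc j)) * sin (of_real (1 / real N * real (Suc j)) * w))"
  unfolding polya_sum_def
  by (subst sum.nat_diff_reindex[symmetric], intro sum.cong refl)
     (use assms in \<open>auto simp: of_nat_diff Suc_diff_Suc algebra_simps\<close>)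

lemma polya_sum_zero_imp_real:
  assumes \<omega>: "polya_weight \<omega>" and N: "0 < N" and zero: "polya_sum \<omega> N w = 0"
  shows "Im w = 0"
proof -
  obtain m where m: "N = Suc m" using N gr0_conv_Suc by blast
  define a where "a j = node_mass \<omega> N (N - Suc j)" for j
  have a0: "0 < a 0" unfolding a_def using node_mass_pos[OF \<omega> N] N by simp
  have mono: "a j \<le> a (Suc j)" if "j < m" for j
    unfolding a_def using node_mass_antimono[OF \<omega> N, of "N - Suc (Suc j)"] that m
    by (simp add: Suc_diff_Suc)
  have "(\<Sum>j\<le>m. of_real (a j) * sin (of_real (1 / real N * real (Suc j)) * w)) = 0"
    using zero unfolding polya_sum_eq_sine_sum[OF N] a_def by (simp add: m lessThan_Suc_atMost)
  moreover have "0 < 1 / real N" using N by simp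
  ultimately show ?thesis using sine_sum_zero_imp_real[of a m "1 / real N" w] a0 mono by blast
qed

lemma integral_eq_antiderivative_diff:
  fixes F f :: "real \<Rightarrow> real"
  assumes "a \<le> b" "\<And>x. (F has_real_derivative f x) (at x)"
  shows "integral {a..b} f = F b - F a"
proof -
  have "(f has_integral (F b - F a)) {a..b}"
    by (rule fundamental_theorem_of_calculus[OF assms(1)])
       (use assms(2) in \<open>auto simp: has_real_derivative_iff_has_vector_derivative[symmetric]
          intro: has_field_derivative_at_within\<close>)
  then show ?thesis by (rule integral_unique)
qed

lemma integral_sin_mult_sin_cos:
  assumes "x \<noteq> 0"
  shows "integral {0..pi/2} (\<lambda>\<theta>. sin \<theta> * sin (x * cos \<theta>)) = (1 - cos x) / x"
proof -
  have "integral {0..pi/2} (\<lambda>\<theta>. sin \<theta> * sin (x * cos \<theta>)) = cos (x * cos (pi/2)) / x - cos (x * cos 0) / x"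
    using assms by (intro integral_eq_antiderivative_diff) (auto intro!: derivative_eq_intros simp: field_simps)
  then show ?thesis by (simp add: diff_divide_distrib)
qed

lemma polya_integral_0 [simp]: "polya_integral \<omega> 0 = 0"
  by (simp add: polya_integral_def)

lemma polya_integral_minus: "polya_integral \<omega> (- w) = - polya_integral \<omega> w"
  by (simp add: polya_integral_def)

lemma polya_integral_add_scaled:
  assumes "continuous_on {0..pi/2} \<omega>" "continuous_on {0..pi/2} h"
  shows "polya_integral (\<lambda>\<theta>. \<omega> \<theta> + c * h \<theta>) w = polya_integral \<omega> w + of_real c * polya_integral h w"
proof -
  have "(\<lambda>\<theta>. of_real (\<omega> \<theta>) * sin (w * of_real (cos \<theta>))) integrable_on {0..pi/2}"
    "(\<lambda>\<theta>. of_real c * (of_real (h \<theta>) * sin (w * of_real (cos \<theta>)))) integrable_on {0..pi/2}"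
    by (intro integrable_continuous_interval continuous_intros assms)+
  then show ?thesis
    unfolding polya_integral_def by (simp add: algebra_simps flip: integral_add integral_mult_right)
qed

lemma polya_integral_of_real:
  assumes "continuous_on {0..pi/2} \<omega>"
  shows "polya_integral \<omega> (of_real x) = of_real (integral {0..pi/2} (\<lambda>\<theta>. \<omega> \<theta> * sin (x * cos \<theta>)))"
proof -
  have "polya_integral \<omega> (of_real x) = integral {0..pi/2} (\<lambda>\<theta>. complex_of_real (\<omega> \<theta> * sin (x * cos \<theta>)))"
    unfolding polya_integral_def by (simp flip: sin_of_real)
  also have "\<dots> = of_real (integral {0..pi/2} (\<lambda>\<theta>. \<omega> \<theta> * sin (x * cos \<theta>)))"
    by (intro integral_complex_of_real integrable_continuous_interval continuous_intros assms)
  finally show ?thesis .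
qed

lemma polya_integral_of_real_ge:
  assumes \<omega>: "polya_weight \<omega>" and x: "0 < x" "x \<le> pi"
  shows "\<omega> (pi/2) * ((1 - cos x) / x) \<le> integral {0..pi/2} (\<lambda>\<theta>. \<omega> \<theta> * sin (x * cos \<theta>))"
proof -
  have cont: "continuous_on {0..pi/2} \<omega>" using \<omega> by (simp add: polya_weight_def)
  have "\<omega> (pi/2) * ((1 - cos x) / x) = integral {0..pi/2} (\<lambda>\<theta>. \<omega> (pi/2) * (sin \<theta> * sin (x * cos \<theta>)))"
    using integral_sin_mult_sin_cos[of x] x by simp
  also have "\<dots> \<le> integral {0..pi/2} (\<lambda>\<theta>. \<omega> \<theta> * sin (x * cos \<theta>))"
  proof (rule integral_le)
    show "(\<lambda>\<theta>. \<omega> (pi/2) * (sin \<theta> * sin (x * cos \<theta>))) integrable_on {0..pi/2}"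
      "(\<lambda>\<theta>. \<omega> \<theta> * sin (x * cos \<theta>)) integrable_on {0..pi/2}"
      by (intro integrable_continuous_interval continuous_intros cont)+
    fix \<theta> assume \<theta>: "\<theta> \<in> {0..pi/2}"
    then have "0 \<le> cos \<theta>" "cos \<theta> \<le> 1" by (auto intro: cos_ge_zero)
    then have "0 \<le> x * cos \<theta>" "x * cos \<theta> \<le> pi" using x by (simp, smt (verit) mult_left_le)
    then have "0 \<le> sin (x * cos \<theta>)" by (rule sin_ge_zero)
    then show "\<omega> (pi/2) * (sin \<theta> * sin (x * cos \<theta>)) \<le> \<omega> \<theta> * sin (x * cos \<theta>)"
      using polya_weight_ge_sin[OF \<omega>, of \<theta>] \<theta> by (simp add: mult.assoc[symmetric] mult_right_mono)
  qed
  finally show ?thesis .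
qed

lemma polya_integral_pos:
  assumes \<omega>: "polya_weight \<omega>" and x: "0 < x" "x \<le> pi"
  shows "0 < Re (polya_integral \<omega> (of_real x))"
proof -
  have "cos x < 1" using x cos_monotone_0_pi[of 0 x] by simp
  then have "0 < \<omega> (pi/2) * ((1 - cos x) / x)" using \<omega> x by (simp add: polya_weight_def)
  then show ?thesis
    using polya_integral_of_real_ge[OF assms] polya_integral_of_real[of \<omega> x] \<omega>
    by (simp add: polya_weight_def)
qed

lemma polya_sum_holomorphic: "polya_sum \<omega> N holomorphic_on S"
  unfolding polya_sum_def by (intro holomorphic_intros)

lemma uniform_limit_polya_sum:
  assumes \<omega>: "polya_weight \<omega>" and K: "compact K"
  shows "uniform_limit K (\<lambda>n. polya_sum \<omega> (Suc n)) (polya_integral \<omega>) sequentially"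
proof (rule uniform_limitI)
  fix e :: real assume "0 < e"
  obtain M where M: "0 \<le> M" "\<And>w. w \<in> K \<Longrightarrow> norm w \<le> M"
    using compact_imp_bounded[OF K] by (metis bounded_iff norm_ge_zero order_trans)
  define I where "I = integral {0..pi/2} \<omega>"
  have "0 \<le> I" unfolding I_def using \<omega> polya_weight_nonneg[OF \<omega>]
    by (intro integral_nonneg integrable_continuous_interval) (auto simp: polya_weight_def)
  have "(\<lambda>n. I * (exp M * (M / real (Suc n)))) \<longlonglongrightarrow> 0"
    using LIMSEQ_Suc[OF lim_const_over_n[of "I * exp M * M"]] by (simp add: mult.assoc)
  then have "\<forall>\<^sub>F n in sequentially. I * (exp M * (M / real (Suc n))) < e"
    using \<open>0 < e\<close> by (rule order_tendstoD)
  then show "\<forall>\<^sub>F n in sequentially. \<forall>w\<in>K. dist (polya_sum \<omega> (Suc n) w) (polya_integral \<omega> w) < e"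
  proof (rule eventually_mono, intro ballI)
    fix n w assume n: "I * (exp M * (M / real (Suc n))) < e" and "w \<in> K"
    have "dist (polya_sum \<omega> (Suc n) w) (polya_integral \<omega> w) \<le> I * (exp (norm w) * (norm w / real (Suc n)))"
      using norm_polya_integral_diff_polya_sum_le[OF \<omega>, of "Suc n" w]
      by (simp add: I_def dist_norm norm_minus_commute)
    also have "\<dots> \<le> I * (exp M * (M / real (Suc n)))"
      using M \<open>w \<in> K\<close> \<open>0 \<le> I\<close> by (intro mult_left_mono mult_mono divide_right_mono) auto
    finally show "dist (polya_sum \<omega> (Suc n) w) (polya_integral \<omega> w) < e" using n by simp
  qed
qed

lemma polya_integral_holomorphic:
  assumes "polya_weight \<omega>"
  shows "polya_integral \<omega> holomorphic_on S"
proof -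
  have "polya_integral \<omega> holomorphic_on UNIV"
  proof (rule holomorphic_uniform_sequence[where f="\<lambda>n. polya_sum \<omega> (Suc n)"])
    show "\<exists>d>0. cball x d \<subseteq> UNIV \<and> uniform_limit (cball x d) (\<lambda>n. polya_sum \<omega> (Suc n)) (polya_integral \<omega>) sequentially"
      for x :: complex
      by (intro exI[of _ 1] conjI) (auto intro: uniform_limit_polya_sum[OF assms])
  qed (simp_all add: polya_sum_holomorphic)
  then show ?thesis by (rule holomorphic_on_subset) simp
qed

lemma polya_integral_not_constant_on:
  assumes \<omega>: "polya_weight \<omega>" and S: "open S" "S \<noteq> {}"
  shows "\<not> polya_integral \<omega> constant_on S"
proof
  assume "polya_integral \<omega> constant_on S"
  then obtain c where c: "\<And>z. z \<in> S \<Longrightarrow> polya_integral \<omega> z = c" unfolding constant_on_def by blast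
  have "polya_integral \<omega> z = c" for z
    using analytic_continuation_open[of S UNIV "polya_integral \<omega>" "\<lambda>_. c"] S c
      polya_integral_holomorphic[OF \<omega>] by auto
  then have "polya_integral \<omega> (of_real (pi/2)) = 0" by (metis polya_integral_0)
  then show False using polya_integral_pos[OF \<omega>, of "pi/2"] by simp
qed

theorem polya_integral_zero_imp_real:
  assumes \<omega>: "polya_weight \<omega>" and zero: "polya_integral \<omega> z = 0"
  shows "Im z = 0"
proof -
  define S where "S = {z::complex. 0 < Im z}"
  have "polya_integral \<omega> z \<noteq> 0" if "z \<in> S" for z
  proof (rule Hurwitz_no_zeros[where \<F>="\<lambda>n. polya_sum \<omega> (Suc n)" and S=S and g="polya_integral \<omega>"])
    show S: "open S" "connected S"
      unfolding S_def by (simp_all add: open_halfspace_Im_gt connected_halfspace_Im_gt)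
    show "\<not> polya_integral \<omega> constant_on S"
      using that S by (intro polya_integral_not_constant_on[OF \<omega>]) auto
    show "polya_sum \<omega> (Suc n) u \<noteq> 0" if "u \<in> S" for n u
      using polya_sum_zero_imp_real[OF \<omega>, of "Suc n" u] that unfolding S_def by auto
  qed (use that in \<open>simp_all add: polya_sum_holomorphic polya_integral_holomorphic[OF \<omega>] uniform_limit_polya_sum[OF \<omega>]\<close>)
  moreover have "polya_integral \<omega> (- z) = 0" using zero by (simp add: polya_integral_minus)
  moreover have "z \<in> S \<or> - z \<in> S" if "Im z \<noteq> 0" using that unfolding S_def by auto
  ultimately show ?thesis using zero by blast
qed

section \<open>The hypergeometric function as a Polya integral\<close>

definition cos_moment :: "real \<Rightarrow> nat \<Rightarrow> real" where
  "cos_moment \<nu> m = integral {0..pi/2} (\<lambda>\<theta>. cos (\<nu> * \<theta>) * cos \<theta> ^ m)"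

lemma cos_moment_1: "(1 - \<nu>\<^sup>2) * cos_moment \<nu> 1 = cos (\<nu> * pi / 2)"
proof -
  have "integral {0..pi/2} (\<lambda>\<theta>. (1 - \<nu>\<^sup>2) * (cos (\<nu> * \<theta>) * cos \<theta>))
      = (cos (\<nu> * (pi/2)) * sin (pi/2) - \<nu> * sin (\<nu> * (pi/2)) * cos (pi/2))
        - (cos (\<nu> * 0) * sin 0 - \<nu> * sin (\<nu> * 0) * cos 0)"
    by (intro integral_eq_antiderivative_diff)
       (auto intro!: derivative_eq_intros simp: algebra_simps power2_eq_square)
  then show ?thesis unfolding cos_moment_def by simp
qed

lemma has_real_derivative_cos_power_Suc:
  "((\<lambda>\<theta>. cos \<theta> ^ Suc n) has_real_derivative - (real (Suc n) * cos \<theta> ^ n * sin \<theta>)) (at \<theta>)"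
  using DERIV_power[OF DERIV_cos[of \<theta>], of "Suc n"] by (simp add: algebra_simps)

lemma cos_moment_rec_antiderivative:
  fixes k :: nat and \<nu> \<theta> :: real
  defines "Q \<equiv> \<lambda>\<theta>. (real k + 2) * cos (\<nu> * \<theta>) * cos \<theta> ^ Suc k * sin \<theta> - \<nu> * sin (\<nu> * \<theta>) * cos \<theta> ^ Suc (Suc k)"
  shows "(Q has_real_derivative
     ((real k + 2)\<^sup>2 - \<nu>\<^sup>2) * (cos (\<nu> * \<theta>) * cos \<theta> ^ (k + 2)) - (real k + 2) * (real k + 1) * (cos (\<nu> * \<theta>) * cos \<theta> ^ k)) (at \<theta>)"
proof -
  define p where "p n \<theta> = cos \<theta> ^ n" for n and \<theta> :: real
  have dp: "(p (Suc n) has_real_derivative - (real (Suc n) * p n \<theta> * sin \<theta>)) (at \<theta>)" for n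
    unfolding p_def by (rule has_real_derivative_cos_power_Suc)
  have "(Q has_real_derivative
      (real k + 2) * (- \<nu> * sin (\<nu> * \<theta>) * p (Suc k) \<theta> * sin \<theta>
        + cos (\<nu> * \<theta>) * (- (real (Suc k) * p k \<theta> * sin \<theta>) * sin \<theta> + p (Suc k) \<theta> * cos \<theta>))
      - \<nu> * (\<nu> * cos (\<nu> * \<theta>) * p (Suc (Suc k)) \<theta> + sin (\<nu> * \<theta>) * - (real (Suc (Suc k)) * p (Suc k) \<theta> * sin \<theta>)))
     (at \<theta>)"
  proof -
    have "Q = (\<lambda>\<theta>. (real k + 2) * cos (\<nu> * \<theta>) * p (Suc k) \<theta> * sin \<theta> - \<nu> * sin (\<nu> * \<theta>) * p (Suc (Suc k)) \<theta>)"
      unfolding Q_def p_def ..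
    then show ?thesis by (auto intro!: derivative_eq_intros dp simp: algebra_simps)
  qed
  moreover have "sin \<theta> * sin \<theta> = 1 - cos \<theta> * cos \<theta>"
    using sin_squared_eq[of \<theta>] by (simp add: power2_eq_square)
  moreover have "(K + 2) * (- \<nu> * B * (P * c) * s + A * (- ((1 + K) * P * s) * s + P * c * c))
      - \<nu> * (\<nu> * A * (P * c * c) + B * - ((1 + (1 + K)) * (P * c) * s))
      = ((K + 2)\<^sup>2 - \<nu>\<^sup>2) * (A * (P * c\<^sup>2)) - (K + 2) * (K + 1) * (A * P)"
    if "s * s = 1 - c * c" for K A B P c s :: real
    using that by algebra
  ultimately show ?thesis
    unfolding p_def power_Suc2 power_add of_nat_Suc by (elim DERIV_cong) blast
qed

lemma cos_moment_rec:
  "((real k + 2)\<^sup>2 - \<nu>\<^sup>2) * cos_moment \<nu> (k + 2) = (real k + 2) * (real k + 1) * cos_moment \<nu> k"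
proof -
  define f where "f m \<theta> = cos (\<nu> * \<theta>) * cos \<theta> ^ m" for m and \<theta> :: real
  have int: "f m integrable_on {0..pi/2}" for m
    unfolding f_def by (intro integrable_continuous_interval continuous_intros)
  have "integral {0..pi/2} (\<lambda>\<theta>. ((real k + 2)\<^sup>2 - \<nu>\<^sup>2) * f (k + 2) \<theta> - (real k + 2) * (real k + 1) * f k \<theta>) = 0"
    using integral_eq_antiderivative_diff[OF _ cos_moment_rec_antiderivative, of 0 "pi/2" k \<nu>]
    by (simp add: f_def)
  moreover have "integral {0..pi/2} (\<lambda>\<theta>. ((real k + 2)\<^sup>2 - \<nu>\<^sup>2) * f (k + 2) \<theta> - (real k + 2) * (real k + 1) * f k \<theta>)
      = ((real k + 2)\<^sup>2 - \<nu>\<^sup>2) * integral {0..pi/2} (f (k + 2)) - (real k + 2) * (real k + 1) * integral {0..pi/2} (f k)"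
    by (simp only: integral_diff[OF integrable_on_mult_right[OF int] integrable_on_mult_right[OF int]]
        integral_mult_right)
  ultimately show ?thesis
    unfolding cos_moment_def f_def[symmetric] by simp
qed

definition hyp_coeff :: "real \<Rightarrow> nat \<Rightarrow> real" where
  "hyp_coeff \<nu> n = 1 / (pochhammer ((3 - \<nu>) / 2) n * pochhammer ((3 + \<nu>) / 2) n)"

definition polya_const :: "real \<Rightarrow> real" where
  "polya_const \<nu> = cos (\<nu> * pi / 2) / (1 - \<nu>\<^sup>2)"

lemma hyp_coeff_0 [simp]: "hyp_coeff \<nu> 0 = 1"
  by (simp add: hyp_coeff_def)

lemma hyp_coeff_Suc:
  "hyp_coeff \<nu> (Suc n) = hyp_coeff \<nu> n / (((3 - \<nu>) / 2 + real n) * ((3 + \<nu>) / 2 + real n))"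
  by (simp add: hyp_coeff_def pochhammer_Suc field_simps)

lemma hyp_factor_eq: "4 * (((3 - \<nu>) / 2 + real n) * ((3 + \<nu>) / 2 + real n)) = (real (2 * n + 1) + 2)\<^sup>2 - \<nu>\<^sup>2"
  by (simp add: power2_eq_square field_simps)

lemma hyp_factor_ge:
  assumes "\<bar>\<nu>\<bar> < 1"
  shows "real n + 1 \<le> ((3 - \<nu>) / 2 + real n) * ((3 + \<nu>) / 2 + real n)"
proof -
  have "\<nu> < 1" "- 1 < \<nu>" using assms by auto
  then have "1 \<le> (3 - \<nu>) / 2 + real n" "real n + 1 \<le> (3 + \<nu>) / 2 + real n"
    by (simp_all add: field_simps)
  then show ?thesis using mult_mono[of 1 _ "real n + 1"] by simp
qed

lemma hyp_coeff_pos: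
  assumes "\<bar>\<nu>\<bar> < 1"
  shows "0 < hyp_coeff \<nu> n"
proof -
  have "0 < (3 - \<nu>) / 2" "0 < (3 + \<nu>) / 2" using assms by auto
  then show ?thesis unfolding hyp_coeff_def by (simp add: pochhammer_pos)
qed

lemma hyp_coeff_le_inverse_fact:
  assumes "\<bar>\<nu>\<bar> < 1"
  shows "hyp_coeff \<nu> n \<le> 1 / fact n"
proof (induction n)
  case 0
  then show ?case by simp
next
  case (Suc n)
  have "hyp_coeff \<nu> (Suc n) \<le> hyp_coeff \<nu> n / (real n + 1)"
    unfolding hyp_coeff_Suc using hyp_coeff_pos[OF assms, of n] hyp_factor_ge[OF assms, of n]
    by (intro divide_left_mono) auto
  also have "\<dots> \<le> (1 / fact n) / (real n + 1)"
    using Suc.IH by (intro divide_right_mono) auto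
  also have "\<dots> = 1 / fact (Suc n)" by (simp add: field_simps)
  finally show ?case .
qed

lemma cos_moment_odd:
  assumes \<nu>: "\<bar>\<nu>\<bar> < 1"
  shows "cos_moment \<nu> (2 * n + 1) / fact (2 * n + 1) = polya_const \<nu> * hyp_coeff \<nu> n / 4 ^ n"
proof (induction n)
  case 0
  have "1 - \<nu>\<^sup>2 \<noteq> 0" using \<nu> by (simp add: abs_square_less_1 less_imp_neq)
  then show ?case using cos_moment_1[of \<nu>] by (simp add: polya_const_def field_simps)
next
  case (Suc n)
  define m where "m = 2 * n + 1"
  have "1 \<le> (real m + 2)\<^sup>2" by (rule one_le_power) simp
  moreover have "\<nu>\<^sup>2 < 1" using \<nu> by (simp add: abs_square_less_1)
  ultimately have d: "(real m + 2)\<^sup>2 - \<nu>\<^sup>2 \<noteq> 0" by linarith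
  have "cos_moment \<nu> (m + 2) = (real m + 2) * (real m + 1) * cos_moment \<nu> m / ((real m + 2)\<^sup>2 - \<nu>\<^sup>2)"
    using cos_moment_rec[of m \<nu>] d by (simp add: eq_divide_eq mult.commute)
  moreover have "fact (m + 2) = (real m + 2) * (real m + 1) * (fact m :: real)"
    by (simp add: numeral_eq_Suc algebra_simps)
  ultimately have "cos_moment \<nu> (m + 2) / fact (m + 2) = cos_moment \<nu> m / fact m / ((real m + 2)\<^sup>2 - \<nu>\<^sup>2)"
    by (simp add: divide_simps del: of_nat_fact fact_Suc)
  also have "\<dots> = polya_const \<nu> * hyp_coeff \<nu> n / 4 ^ n / (4 * (((3 - \<nu>) / 2 + real n) * ((3 + \<nu>) / 2 + real n)))"
    using Suc.IH unfolding hyp_factor_eq m_def by simp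
  also have "\<dots> = polya_const \<nu> * hyp_coeff \<nu> (Suc n) / 4 ^ Suc n"
    unfolding hyp_coeff_Suc by (simp add: field_simps)
  finally show ?case by (simp add: m_def)
qed

lemma sin_odd_sums:
  fixes z :: complex
  shows "(\<lambda>n. (- 1) ^ n * z ^ (2 * n + 1) / of_real (fact (2 * n + 1))) sums sin z"
proof -
  have sm: "strict_mono (\<lambda>n::nat. 2 * n + 1)" by (rule strict_monoI) simp
  have "\<And>n. n \<notin> range (\<lambda>n::nat. 2 * n + 1) \<Longrightarrow> sin_coeff n *\<^sub>R z ^ n = 0"
    by (auto simp: sin_coeff_def elim!: oddE)
  then have "(\<lambda>n. sin_coeff (2 * n + 1) *\<^sub>R z ^ (2 * n + 1)) sums sin z"
    using sums_mono_reindex[OF sm, of "\<lambda>n. sin_coeff n *\<^sub>R z ^ n"] sin_converges[of z] by blast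
  moreover have "sin_coeff (2 * n + 1) *\<^sub>R z ^ (2 * n + 1) = (- 1) ^ n * z ^ (2 * n + 1) / of_real (fact (2 * n + 1))" for n
    by (simp add: sin_coeff_def scaleR_conv_of_real)
  ultimately show ?thesis by simp
qed

lemma summable_odd_exp:
  fixes r :: real
  assumes "0 \<le> r"
  shows "summable (\<lambda>n. r ^ (2 * n + 1) / fact (2 * n + 1))"
proof -
  have sm: "strict_mono (\<lambda>n::nat. 2 * n + 1)" by (rule strict_monoI) simp
  define e where "e m = (if odd m then r ^ m / fact m else 0)" for m
  have "summable e"
    using assms by (intro summable_comparison_test[OF _ summable_exp[of r]])
      (auto simp: e_def divide_inverse mult.commute)
  then have "summable (\<lambda>n. e (2 * n + 1))"
    by (subst summable_mono_reindex[OF sm]) (auto simp: e_def elim!: oddE)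
  then show ?thesis by (simp add: e_def)
qed

lemma sums_integral_of_uniform_limit:
  fixes f :: "nat \<Rightarrow> real \<Rightarrow> 'a::banach"
  assumes ul: "uniform_limit {a..b} (\<lambda>n x. \<Sum>i<n. f i x) g sequentially"
    and cont: "\<And>i. continuous_on {a..b} (f i)"
  shows "(\<lambda>i. integral {a..b} (f i)) sums integral {a..b} g"
proof -
  obtain I J where I: "\<And>n. ((\<lambda>x. \<Sum>i<n. f i x) has_integral I n) {a..b}"
    and J: "(g has_integral J) {a..b}" and IJ: "I \<longlonglongrightarrow> J"
    using uniform_limit_integral[OF ul] cont by (metis continuous_on_sum trivial_limit_sequentially)
  have "((\<lambda>x. \<Sum>i<n. f i x) has_integral (\<Sum>i<n. integral {a..b} (f i))) {a..b}" for n
    using cont by (intro has_integral_sum finite_lessThan integrable_integral integrable_continuous_interval)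
  then have "I = (\<lambda>n. \<Sum>i<n. integral {a..b} (f i))"
    using I by (metis has_integral_unique ext)
  then show ?thesis using IJ J unfolding sums_def by (simp add: integral_unique)
qed

lemma polya_integral_cos_sums:
  "(\<lambda>n. (- 1) ^ n * w ^ (2 * n + 1) / of_real (fact (2 * n + 1)) * of_real (cos_moment \<nu> (2 * n + 1)))
     sums polya_integral (\<lambda>\<theta>. cos (\<nu> * \<theta>)) w"
proof -
  define c where "c n = (- 1) ^ n * w ^ (2 * n + 1) / of_real (fact (2 * n + 1))" for n
  define f where "f n \<theta> = c n * of_real (cos (\<nu> * \<theta>) * cos \<theta> ^ (2 * n + 1))" for n \<theta>
  have sin_sums: "(\<lambda>n. f n \<theta>) sums (of_real (cos (\<nu> * \<theta>)) * sin (w * of_real (cos \<theta>)))" for \<theta>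
    using sums_mult[OF sin_odd_sums[of "w * of_real (cos \<theta>)"], of "of_real (cos (\<nu> * \<theta>))"]
    unfolding f_def c_def by (simp add: power_mult_distrib algebra_simps)
  have "uniform_limit {0..pi/2} (\<lambda>n \<theta>. \<Sum>i<n. f i \<theta>) (\<lambda>\<theta>. \<Sum>i. f i \<theta>) sequentially"
  proof (rule Weierstrass_m_test)
    fix n \<theta> assume "\<theta> \<in> {0..pi/2}"
    have "norm (f n \<theta>) = \<bar>cos (\<nu> * \<theta>)\<bar> * ((norm w * \<bar>cos \<theta>\<bar>) ^ (2 * n + 1) / fact (2 * n + 1))"
      unfolding f_def c_def by (simp add: norm_mult norm_divide norm_power power_mult_distrib del: fact_Suc)
    also have "\<dots> \<le> 1 * (norm w ^ (2 * n + 1) / fact (2 * n + 1))"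
      by (intro mult_mono divide_right_mono power_mono) (auto simp: mult_left_le)
    finally show "norm (f n \<theta>) \<le> norm w ^ (2 * n + 1) / fact (2 * n + 1)" by simp
  qed (rule summable_odd_exp, simp)
  then have "(\<lambda>i. integral {0..pi/2} (f i)) sums polya_integral (\<lambda>\<theta>. cos (\<nu> * \<theta>)) w"
    unfolding polya_integral_def using sin_sums[THEN sums_unique]
    by (intro sums_integral_of_uniform_limit) (auto simp: f_def intro!: continuous_intros)
  moreover have "integral {0..pi/2} (f i) = c i * of_real (cos_moment \<nu> (2 * i + 1))" for i
    unfolding f_def cos_moment_def integral_mult_right
    by (subst integral_complex_of_real) (auto intro!: integrable_continuous_interval continuous_intros)
  ultimately show ?thesis by (simp add: c_def)
qed

definition hyp :: "real \<Rightarrow> complex \<Rightarrow> complex" where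
  "hyp \<nu> z = hyp1F2 1 (of_real ((3 - \<nu>) / 2)) (of_real ((3 + \<nu>) / 2)) z"

lemma summable_hyp_coeff:
  fixes r :: real
  assumes "\<bar>\<nu>\<bar> < 1"
  shows "summable (\<lambda>n. hyp_coeff \<nu> n * r ^ n)"
proof (rule summable_comparison_test[OF _ summable_exp[of "\<bar>r\<bar>"]], intro exI allI impI)
  fix n :: nat
  have "norm (hyp_coeff \<nu> n * r ^ n) = hyp_coeff \<nu> n * \<bar>r\<bar> ^ n"
    using hyp_coeff_pos[OF assms, of n] by (simp add: abs_mult power_abs)
  also have "\<dots> \<le> inverse (fact n) * \<bar>r\<bar> ^ n"
    using hyp_coeff_le_inverse_fact[OF assms, of n] by (intro mult_right_mono) (auto simp: divide_inverse)
  finally show "norm (hyp_coeff \<nu> n * r ^ n) \<le> inverse (fact n) * \<bar>r\<bar> ^ n" .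
qed

lemma hyp_sums:
  assumes "\<bar>\<nu>\<bar> < 1"
  shows "(\<lambda>n. of_real (hyp_coeff \<nu> n) * z ^ n) sums hyp \<nu> z"
proof -
  have "summable (\<lambda>n. norm (of_real (hyp_coeff \<nu> n) * z ^ n))"
    using summable_hyp_coeff[OF assms, of "norm z"] hyp_coeff_pos[OF assms]
    by (simp add: norm_mult norm_power less_imp_le)
  then have "summable (\<lambda>n. of_real (hyp_coeff \<nu> n) * z ^ n)" by (rule summable_norm_cancel)
  moreover have "pochhammer 1 n / (pochhammer (of_real ((3 - \<nu>) / 2)) n * pochhammer (of_real ((3 + \<nu>) / 2)) n)
      * z ^ n / of_nat (fact n) = of_real (hyp_coeff \<nu> n) * z ^ n" for n
    unfolding hyp_coeff_def pochhammer_of_real pochhammer_fact[symmetric] by (simp add: field_simps)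
  ultimately show ?thesis unfolding hyp_def hyp1F2_def by (simp add: summable_sums)
qed

theorem polya_integral_cos_eq_hyp:
  assumes \<nu>: "\<bar>\<nu>\<bar> < 1"
  shows "polya_integral (\<lambda>\<theta>. cos (\<nu> * \<theta>)) w = of_real (polya_const \<nu>) * w * hyp \<nu> (- (w\<^sup>2) / 4)"
proof -
  have eq: "(-1) ^ n * w ^ (2 * n + 1) / of_real (fact (2 * n + 1)) * of_real (cos_moment \<nu> (2 * n + 1))
      = of_real (polya_const \<nu>) * w * (of_real (hyp_coeff \<nu> n) * (- (w\<^sup>2) / 4) ^ n)" for n
  proof -
    have "(-1) ^ n * w ^ (2 * n + 1) / of_real (fact (2 * n + 1)) * of_real (cos_moment \<nu> (2 * n + 1))
        = (-1) ^ n * w ^ (2 * n + 1) * of_real (cos_moment \<nu> (2 * n + 1) / fact (2 * n + 1))"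
      by (simp add: field_simps)
    also have "\<dots> = (-1) ^ n * w ^ (2 * n + 1) * of_real (polya_const \<nu> * hyp_coeff \<nu> n / 4 ^ n)"
      using cos_moment_odd[OF \<nu>, of n] by simp
    also have "\<dots> = of_real (polya_const \<nu>) * w * (of_real (hyp_coeff \<nu> n) * (- (w\<^sup>2) / 4) ^ n)"
      by (simp add: power_minus[of "w\<^sup>2 / 4"] power_divide power_mult[symmetric] field_simps power_add)
    finally show ?thesis .
  qed
  show ?thesis
    using polya_integral_cos_sums[of w \<nu>] sums_mult[OF hyp_sums[OF \<nu>], of "of_real (polya_const \<nu>) * w"]
    unfolding eq by (rule sums_unique2)
qed

section \<open>The hypergeometric function on the real axis\<close>

definition hyp_real :: "real \<Rightarrow> real \<Rightarrow> real" where
  "hyp_real \<nu> r = (\<Sum>n. hyp_coeff \<nu> n * r ^ n)"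

definition hyp_real' :: "real \<Rightarrow> real \<Rightarrow> real" where
  "hyp_real' \<nu> r = (\<Sum>n. diffs (hyp_coeff \<nu>) n * r ^ n)"

definition hyp_real'' :: "real \<Rightarrow> real \<Rightarrow> real" where
  "hyp_real'' \<nu> r = (\<Sum>n. diffs (diffs (hyp_coeff \<nu>)) n * r ^ n)"

lemma summable_diffs_hyp_coeff:
  assumes "\<bar>\<nu>\<bar> < 1"
  shows "summable (\<lambda>n. diffs (hyp_coeff \<nu>) n * r ^ n)" "summable (\<lambda>n. diffs (diffs (hyp_coeff \<nu>)) n * r ^ n)"
  using summable_hyp_coeff[OF assms] by (intro termdiff_converges_all; assumption)+

lemma hyp_real_has_derivative:
  assumes "\<bar>\<nu>\<bar> < 1"
  shows "(hyp_real \<nu> has_real_derivative hyp_real' \<nu> r) (at r)"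
  unfolding hyp_real_def hyp_real'_def
  by (intro termdiffs_strong_converges_everywhere summable_hyp_coeff assms)

lemma hyp_real'_has_derivative:
  assumes "\<bar>\<nu>\<bar> < 1"
  shows "(hyp_real' \<nu> has_real_derivative hyp_real'' \<nu> r) (at r)"
  unfolding hyp_real'_def hyp_real''_def
  by (intro termdiffs_strong_converges_everywhere summable_diffs_hyp_coeff assms)

lemma hyp_of_real:
  assumes "\<bar>\<nu>\<bar> < 1"
  shows "hyp \<nu> (of_real r) = of_real (hyp_real \<nu> r)"
proof -
  have "(\<lambda>n. of_real (hyp_coeff \<nu> n * r ^ n)) sums (complex_of_real (hyp_real \<nu> r))"
    unfolding hyp_real_def using summable_hyp_coeff[OF assms] by (intro sums_of_real summable_sums)
  then show ?thesis using hyp_sums[OF assms, of "of_real r"] by (simp add: sums_unique2)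
qed

lemma deriv_hyp_of_real:
  assumes "\<bar>\<nu>\<bar> < 1"
  shows "deriv (hyp \<nu>) (of_real r) = of_real (hyp_real' \<nu> r)"
proof -
  define c where "c n = complex_of_real (hyp_coeff \<nu> n)" for n
  have "hyp \<nu> = (\<lambda>z. \<Sum>n. c n * z ^ n)"
    using hyp_sums[OF assms] unfolding c_def by (auto simp: fun_eq_iff sums_unique)
  moreover have "summable (\<lambda>n. c n * z ^ n)" for z
    using hyp_sums[OF assms] unfolding c_def by (rule sums_summable)
  ultimately have "deriv (hyp \<nu>) (of_real r) = (\<Sum>n. diffs c n * (of_real r) ^ n)"
    by (auto intro: DERIV_imp_deriv termdiffs_strong_converges_everywhere)
  also have "\<dots> = (\<Sum>n. of_real (diffs (hyp_coeff \<nu>) n * r ^ n))"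
    by (simp add: c_def diffs_def)
  also have "\<dots> = of_real (hyp_real' \<nu> r)"
    unfolding hyp_real'_def using summable_diffs_hyp_coeff(1)[OF assms]
    by (intro sums_unique[symmetric] sums_of_real summable_sums)
  finally show ?thesis .
qed

lemma hyp_coeff_rec:
  assumes "\<bar>\<nu>\<bar> < 1"
  shows "((real (Suc m))\<^sup>2 + real (Suc m) + (1 - \<nu>\<^sup>2) / 4) * hyp_coeff \<nu> (Suc m) = hyp_coeff \<nu> m"
proof -
  have eq: "((real (Suc m))\<^sup>2 + real (Suc m) + (1 - \<nu>\<^sup>2) / 4) = ((3 - \<nu>) / 2 + real m) * ((3 + \<nu>) / 2 + real m)"
    by (simp add: power2_eq_square field_simps)
  have "((3 - \<nu>) / 2 + real m) * ((3 + \<nu>) / 2 + real m) \<noteq> 0"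
    using hyp_factor_ge[OF assms, of m] by linarith
  then show ?thesis unfolding hyp_coeff_Suc eq by simp
qed

lemma hyp_real_ode:
  assumes \<nu>: "\<bar>\<nu>\<bar> < 1"
  shows "r\<^sup>2 * hyp_real'' \<nu> r + 2 * r * hyp_real' \<nu> r + ((1 - \<nu>\<^sup>2) / 4 - r) * hyp_real \<nu> r = (1 - \<nu>\<^sup>2) / 4"
proof -
  define c where "c = hyp_coeff \<nu>"
  define a where "a = (1 - \<nu>\<^sup>2) / 4"
  define shift where "shift k f m = (if m < k then 0 else f (m - k))" for k and f :: "nat \<Rightarrow> real" and m
  have shift_sums: "shift k f sums s" if "f sums s" for k f s
    using that sums_zero_iff_shift[of k "shift k f" s] unfolding shift_def by simp
  have "shift 2 (\<lambda>n. r\<^sup>2 * (diffs (diffs c) n * r ^ n)) sums (r\<^sup>2 * hyp_real'' \<nu> r)"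
    "shift 1 (\<lambda>n. 2 * r * (diffs c n * r ^ n)) sums (2 * r * hyp_real' \<nu> r)"
    "shift 1 (\<lambda>n. r * (c n * r ^ n)) sums (r * hyp_real \<nu> r)"
    "(\<lambda>n. a * (c n * r ^ n)) sums (a * hyp_real \<nu> r)"
    unfolding hyp_real_def hyp_real'_def hyp_real''_def c_def
    using summable_hyp_coeff[OF \<nu>] summable_diffs_hyp_coeff[OF \<nu>]
    by (intro shift_sums sums_mult summable_sums; simp)+
  then have "(\<lambda>m. shift 2 (\<lambda>n. r\<^sup>2 * (diffs (diffs c) n * r ^ n)) m + shift 1 (\<lambda>n. 2 * r * (diffs c n * r ^ n)) m
      + a * (c m * r ^ m) - shift 1 (\<lambda>n. r * (c n * r ^ n)) m)
      sums (r\<^sup>2 * hyp_real'' \<nu> r + 2 * r * hyp_real' \<nu> r + a * hyp_real \<nu> r - r * hyp_real \<nu> r)"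
    by (intro sums_add sums_diff)
  moreover have "shift 2 (\<lambda>n. r\<^sup>2 * (diffs (diffs c) n * r ^ n)) m + shift 1 (\<lambda>n. 2 * r * (diffs c n * r ^ n)) m
      + a * (c m * r ^ m) - shift 1 (\<lambda>n. r * (c n * r ^ n)) m = (if m = 0 then a else 0)" for m
  proof (cases m)
    case 0
    then show ?thesis by (simp add: shift_def c_def)
  next
    case (Suc k)
    have "shift 2 (\<lambda>n. r\<^sup>2 * (diffs (diffs c) n * r ^ n)) m + shift 1 (\<lambda>n. 2 * r * (diffs c n * r ^ n)) m
        + a * (c m * r ^ m) - shift 1 (\<lambda>n. r * (c n * r ^ n)) m
        = (((real (Suc k))\<^sup>2 + real (Suc k) + a) * c (Suc k) - c k) * r ^ m"
      unfolding shift_def diffs_def Suc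
      by (cases k) (simp_all add: algebra_simps power2_eq_square power_Suc2)
    also have "\<dots> = 0" using hyp_coeff_rec[OF \<nu>, of k] unfolding c_def a_def by simp
    finally show ?thesis using Suc by simp
  qed
  ultimately have "(\<lambda>m. if m = 0 then a else 0) sums
      (r\<^sup>2 * hyp_real'' \<nu> r + 2 * r * hyp_real' \<nu> r + a * hyp_real \<nu> r - r * hyp_real \<nu> r)"
    by simp
  then show ?thesis
    using sums_single[of 0 "\<lambda>_. a"] sums_unique2 unfolding a_def by (force simp: algebra_simps)
qed

lemma hyp_real_nonneg_near_double_zero:
  assumes \<nu>: "\<bar>\<nu>\<bar> < 1" and r0: "r0 \<noteq> 0" and zero: "hyp_real \<nu> r0 = 0" "hyp_real' \<nu> r0 = 0"
  shows "eventually (\<lambda>r. 0 \<le> hyp_real \<nu> r) (nhds r0)"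
proof -
  have "r0\<^sup>2 * hyp_real'' \<nu> r0 = (1 - \<nu>\<^sup>2) / 4" using hyp_real_ode[OF \<nu>, of r0] zero by simp
  moreover have "0 < (1 - \<nu>\<^sup>2) / 4" using \<nu> by (simp add: abs_square_less_1)
  ultimately have "0 < hyp_real'' \<nu> r0" using r0 by (metis zero_less_mult_pos zero_less_power2)
  then obtain d where d: "0 < d"
      "\<And>h. 0 < h \<Longrightarrow> h < d \<Longrightarrow> hyp_real' \<nu> (r0 - h) < 0 \<and> 0 < hyp_real' \<nu> (r0 + h)"
    using DERIV_pos_inc_right[OF hyp_real'_has_derivative[OF \<nu>]] DERIV_pos_inc_left[OF hyp_real'_has_derivative[OF \<nu>]]
      zero(2) by (metis min_less_iff_conj)
  have "0 \<le> hyp_real \<nu> r" if "dist r r0 < d" for r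
  proof (cases rule: linorder_cases[of r0 r])
    case less
    then obtain \<xi> where "r0 < \<xi>" "\<xi> < r" "hyp_real \<nu> r - hyp_real \<nu> r0 = (r - r0) * hyp_real' \<nu> \<xi>"
      using MVT2[OF less hyp_real_has_derivative[OF \<nu>]] by blast
    moreover have "0 < hyp_real' \<nu> \<xi>" using d(2)[of "\<xi> - r0"] \<open>r0 < \<xi>\<close> \<open>\<xi> < r\<close> that
      by (auto simp: dist_real_def)
    ultimately show ?thesis using zero by simp
  next
    case greater
    then obtain \<xi> where "r < \<xi>" "\<xi> < r0" "hyp_real \<nu> r0 - hyp_real \<nu> r = (r0 - r) * hyp_real' \<nu> \<xi>"
      using MVT2[OF greater hyp_real_has_derivative[OF \<nu>]] by blast
    moreover have "hyp_real' \<nu> \<xi> < 0" using d(2)[of "r0 - \<xi>"] \<open>r < \<xi>\<close> \<open>\<xi> < r0\<close> that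
      by (auto simp: dist_real_def)
    ultimately have "hyp_real \<nu> r0 - hyp_real \<nu> r < 0" using greater by (simp add: mult_pos_neg)
    then show ?thesis using zero by simp
  qed (use zero in simp)
  then show ?thesis using d(1) unfolding eventually_nhds_metric by blast
qed

section \<open>Simplicity of the zeros\<close>

lemma cos_mult_antimono:
  assumes "0 \<le> a" "a \<le> b" "b \<le> pi/2" "\<bar>\<nu>\<bar> < 1"
  shows "cos (\<nu> * b) \<le> cos (\<nu> * a)"
proof -
  have abs_eq: "cos (\<nu> * t) = cos (\<bar>\<nu>\<bar> * t)" if "0 \<le> t" for t
    using that by (metis abs_mult abs_of_nonneg cos_abs_real)
  have "\<bar>\<nu>\<bar> * b \<le> 1 * b" using assms by (intro mult_right_mono) auto
  then have "\<bar>\<nu>\<bar> * b \<le> pi" using assms pi_gt3 by linarith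
  moreover have "\<bar>\<nu>\<bar> * a \<le> \<bar>\<nu>\<bar> * b" using assms by (intro mult_left_mono) auto
  ultimately have "cos (\<bar>\<nu>\<bar> * b) \<le> cos (\<bar>\<nu>\<bar> * a)"
    using assms by (intro cos_monotone_0_pi_le) auto
  then show ?thesis using abs_eq assms by simp
qed

lemma cos_mult_half_pi_pos:
  assumes "\<bar>\<nu>\<bar> < 1"
  shows "0 < cos (\<nu> * pi / 2)"
proof -
  have "- 1 < \<nu>" "\<nu> < 1" using assms by auto
  then have "- (pi/2) < \<nu> * (pi/2)" "\<nu> * (pi/2) < pi/2"
    using mult_strict_right_mono[of "-1" \<nu> "pi/2"] mult_strict_right_mono[of \<nu> 1 "pi/2"] by simp_all
  then show ?thesis using cos_gt_zero_pi by simp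
qed

lemma polya_weight_cos:
  assumes \<nu>: "\<bar>\<nu>\<bar> < 1"
  shows "polya_weight (\<lambda>\<theta>. cos (\<nu> * \<theta>))"
  unfolding polya_weight_def
proof (intro conjI allI impI)
  show "continuous_on {0..pi/2} (\<lambda>\<theta>. cos (\<nu> * \<theta>))" by (intro continuous_intros)
  show "0 \<le> cos (\<nu> * 0)" "0 < cos (\<nu> * (pi/2))" using cos_mult_half_pi_pos[OF \<nu>] by simp_all
  fix a b :: real assume ab: "0 < a" "a \<le> b" "b \<le> pi/2"
  have "0 < sin a" "sin a \<le> sin b" using ab by (auto intro: sin_gt_zero sin_monotone_2pi_le)
  moreover have "0 < cos (\<nu> * b)"
    using cos_mult_antimono[of b "pi/2" \<nu>] ab \<nu> cos_mult_half_pi_pos[OF \<nu>] by simp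
  moreover have "cos (\<nu> * b) \<le> cos (\<nu> * a)" using cos_mult_antimono[of a b \<nu>] ab \<nu> by simp
  ultimately show "cos (\<nu> * b) / sin b \<le> cos (\<nu> * a) / sin a"
    by (meson divide_left_mono divide_right_mono less_le_trans less_imp_le mult_pos_pos order_trans)
qed

lemma polya_weight_add_sin:
  assumes \<omega>: "polya_weight \<omega>" and "0 \<le> c"
  shows "polya_weight (\<lambda>\<theta>. \<omega> \<theta> + c * sin \<theta>)"
  unfolding polya_weight_def
proof (intro conjI allI impI)
  show "continuous_on {0..pi/2} (\<lambda>\<theta>. \<omega> \<theta> + c * sin \<theta>)"
    using \<omega> by (intro continuous_intros) (simp add: polya_weight_def)
  show "0 \<le> \<omega> 0 + c * sin 0" "0 < \<omega> (pi/2) + c * sin (pi/2)"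
    using \<omega> \<open>0 \<le> c\<close> by (simp_all add: polya_weight_def)
  fix a b :: real assume ab: "0 < a" "a \<le> b" "b \<le> pi/2"
  have "0 < sin a" "0 < sin b" using ab by (auto intro!: sin_gt_zero)
  moreover have "\<omega> b / sin b \<le> \<omega> a / sin a" using \<omega> ab by (simp add: polya_weight_def)
  ultimately show "(\<omega> b + c * sin b) / sin b \<le> (\<omega> a + c * sin a) / sin a"
    by (simp add: add_divide_distrib)
qed

lemma cos_mult_div_sin_diff_ge:
  assumes \<nu>: "\<bar>\<nu>\<bar> < 1" and ab: "0 < a" "a \<le> b" "b \<le> pi/2"
  shows "cos (\<nu> * pi / 2) * (sin b - sin a) \<le> cos (\<nu> * a) / sin a - cos (\<nu> * b) / sin b"
proof -
  have sa: "0 < sin a" "sin a \<le> sin b" "sin b \<le> 1" using ab by (auto intro: sin_gt_zero sin_monotone_2pi_le)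
  have cb: "cos (\<nu> * pi / 2) \<le> cos (\<nu> * b)" using cos_mult_antimono[of b "pi/2" \<nu>] ab \<nu> by simp
  have "cos (\<nu> * pi / 2) * (sin b - sin a) \<le> cos (\<nu> * b) * (sin b - sin a)"
    using cb sa by (intro mult_right_mono) auto
  also have "\<dots> \<le> cos (\<nu> * b) * (sin b - sin a) / (sin a * sin b)"
  proof -
    have "0 \<le> cos (\<nu> * b) * (sin b - sin a)" using cb cos_mult_half_pi_pos[OF \<nu>] sa by simp
    moreover have "0 < sin a * sin b" "sin a * sin b \<le> 1" using sa by (auto intro: mult_le_one)
    ultimately show ?thesis by (simp add: le_divide_eq mult_left_le)
  qed
  also have "\<dots> = cos (\<nu> * b) / sin a - cos (\<nu> * b) / sin b"
    using sa by (simp add: field_simps)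
  also have "\<dots> \<le> cos (\<nu> * a) / sin a - cos (\<nu> * b) / sin b"
    using cos_mult_antimono[of a b \<nu>] ab \<nu> sa by (simp add: divide_right_mono)
  finally show ?thesis .
qed

lemma polya_weight_cos_minus:
  assumes \<nu>: "\<bar>\<nu>\<bar> < 1" and c: "0 \<le> c" "c \<le> cos (\<nu> * pi / 2) / 2"
  shows "polya_weight (\<lambda>\<theta>. cos (\<nu> * \<theta>) + c * - ((cos \<theta>)\<^sup>2 * sin \<theta>))"
  unfolding polya_weight_def
proof (intro conjI allI impI)
  show "continuous_on {0..pi/2} (\<lambda>\<theta>. cos (\<nu> * \<theta>) + c * - ((cos \<theta>)\<^sup>2 * sin \<theta>))"
    by (intro continuous_intros)
  show "0 \<le> cos (\<nu> * 0) + c * - ((cos 0)\<^sup>2 * sin 0)"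
    "0 < cos (\<nu> * (pi/2)) + c * - ((cos (pi/2))\<^sup>2 * sin (pi/2))"
    using cos_mult_half_pi_pos[OF \<nu>] by simp_all
  fix a b :: real assume ab: "0 < a" "a \<le> b" "b \<le> pi/2"
  have sa: "0 < sin a" "sin a \<le> sin b" using ab by (auto intro: sin_gt_zero sin_monotone_2pi_le)
  have "c * ((cos a)\<^sup>2 - (cos b)\<^sup>2) = c * ((sin b - sin a) * (sin b + sin a))"
    unfolding cos_squared_eq by (simp add: algebra_simps power2_eq_square)
  also have "\<dots> \<le> cos (\<nu> * pi / 2) / 2 * ((sin b - sin a) * 2)"
  proof -
    have "sin b + sin a \<le> 2" using sin_le_one[of a] sin_le_one[of b] by linarith
    then show ?thesis using c sa by (intro mult_mono) auto
  qed
  also have "\<dots> = cos (\<nu> * pi / 2) * (sin b - sin a)" by simp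
  also have "\<dots> \<le> cos (\<nu> * a) / sin a - cos (\<nu> * b) / sin b"
    by (rule cos_mult_div_sin_diff_ge[OF \<nu> ab])
  finally have "cos (\<nu> * b) / sin b - c * (cos b)\<^sup>2 \<le> cos (\<nu> * a) / sin a - c * (cos a)\<^sup>2"
    by (simp add: algebra_simps)
  then show "(cos (\<nu> * b) + c * - ((cos b)\<^sup>2 * sin b)) / sin b \<le> (cos (\<nu> * a) + c * - ((cos a)\<^sup>2 * sin a)) / sin a"
    using sa by (simp add: field_simps)
qed

lemma integral_cos_sq_sin_mult_sin_cos:
  assumes "x \<noteq> 0" "cos x = 1"
  shows "integral {0..pi/2} (\<lambda>\<theta>. - ((cos \<theta>)\<^sup>2 * sin \<theta>) * sin (x * cos \<theta>)) = 1 / x"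
proof -
  define P where "P s = - (s\<^sup>2 * cos (x * s)) / x + 2 * (s * sin (x * s)) / x\<^sup>2 + 2 * cos (x * s) / x ^ 3" for s
  have "sin x = 0" using assms(2) sin_cos_squared_add[of x] by simp
  have dP: "(P has_real_derivative s\<^sup>2 * sin (x * s)) (at s)" for s
    unfolding P_def using assms(1)
    by (auto intro!: derivative_eq_intros simp: field_simps power2_eq_square power3_eq_cube)
  have "integral {0..pi/2} (\<lambda>\<theta>. - ((cos \<theta>)\<^sup>2 * sin \<theta>) * sin (x * cos \<theta>)) = P (cos (pi/2)) - P (cos 0)"
    by (rule integral_eq_antiderivative_diff)
       (auto intro!: DERIV_chain2[OF dP DERIV_cos, THEN DERIV_cong] simp: algebra_simps)
  also have "\<dots> = 1 / x" unfolding P_def using assms \<open>sin x = 0\<close> by (simp add: field_simps power3_eq_cube)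
  finally show ?thesis .
qed

lemma uniform_limit_add_vanishing_multiple:
  fixes g \<Psi> :: "complex \<Rightarrow> complex"
  assumes K: "compact K" and \<Psi>: "continuous_on K \<Psi>" and c: "c \<longlonglongrightarrow> 0"
  shows "uniform_limit K (\<lambda>n z. g z + of_real (c n) * \<Psi> z) g sequentially"
proof (rule uniform_limitI)
  fix e :: real assume "0 < e"
  obtain B where B: "0 < B" "\<And>z. z \<in> K \<Longrightarrow> norm (\<Psi> z) \<le> B"
    using compact_imp_bounded[OF compact_continuous_image[OF \<Psi> K]] by (auto simp: bounded_pos)
  have "\<forall>\<^sub>F n in sequentially. \<bar>c n\<bar> < e / B"
    using c \<open>0 < e\<close> \<open>0 < B\<close> by (auto simp: tendsto_iff dist_real_def)
  then show "\<forall>\<^sub>F n in sequentially. \<forall>z\<in>K. dist (g z + of_real (c n) * \<Psi> z) (g z) < e"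
  proof (rule eventually_mono, intro ballI)
    fix n z assume n: "\<bar>c n\<bar> < e / B" and "z \<in> K"
    have "dist (g z + of_real (c n) * \<Psi> z) (g z) = \<bar>c n\<bar> * norm (\<Psi> z)"
      by (simp add: dist_norm norm_mult)
    also have "\<dots> \<le> \<bar>c n\<bar> * B" using B \<open>z \<in> K\<close> by (intro mult_left_mono) auto
    also have "\<dots> < e" using n B by (simp add: pos_less_divide_eq)
    finally show "dist (g z + of_real (c n) * \<Psi> z) (g z) < e" .
  qed
qed

text \<open>For small \<open>t > 0\<close> the function \<open>g + t \<Psi>\<close> has positive real part on the real segment
  around \<open>x\<^sub>0\<close>; if all its zeros are real, it has none near \<open>x\<^sub>0\<close>, contradicting Hurwitz's theorem.\<close>

lemma hurwitz_real_perturbation: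
  fixes g \<Psi> :: "complex \<Rightarrow> complex"
  assumes g: "g holomorphic_on UNIV" and \<Psi>: "\<Psi> holomorphic_on UNIV" and zero: "g (of_real x0) = 0"
    and r: "0 < r" and c0: "0 < c0"
    and g_nonneg: "\<And>x. \<bar>x - x0\<bar> < r \<Longrightarrow> 0 \<le> Re (g (of_real x))"
    and \<Psi>_pos: "\<And>x. \<bar>x - x0\<bar> < r \<Longrightarrow> 0 < Re (\<Psi> (of_real x))"
    and real_zeros: "\<And>t z. 0 < t \<Longrightarrow> t \<le> c0 \<Longrightarrow> g z + of_real t * \<Psi> z = 0 \<Longrightarrow> Im z = 0"
    and nonconst: "\<not> g constant_on ball (of_real x0) r"
  shows False
proof -
  define c where "c n = c0 / real (Suc n)" for n
  have c_bounds: "0 < c n" "c n \<le> c0" for n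
    unfolding c_def using c0 by (auto simp: divide_le_eq)
  have "g (of_real x0) \<noteq> 0"
  proof (rule Hurwitz_no_zeros[where \<F>="\<lambda>n z. g z + of_real (c n) * \<Psi> z" and S="ball (of_real x0) r" and g=g])
    show "uniform_limit K (\<lambda>n z. g z + of_real (c n) * \<Psi> z) g sequentially"
      if "compact K" "K \<subseteq> ball (of_real x0) r" for K
      using that(1) holomorphic_on_imp_continuous_on[OF holomorphic_on_subset[OF \<Psi>]]
        LIMSEQ_Suc[OF lim_const_over_n[of c0]]
      by (intro uniform_limit_add_vanishing_multiple) (auto simp: c_def)
    show "g z + of_real (c n) * \<Psi> z \<noteq> 0" if z: "z \<in> ball (of_real x0) r" for n z
    proof
      assume "g z + of_real (c n) * \<Psi> z = 0"
      then have "Im z = 0" using real_zeros c_bounds by blast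
      then obtain x where zx: "z = of_real x" by (metis complex_is_Real_iff Reals_cases)
      then have "\<bar>x - x0\<bar> < r"
        using z by (metis dist_commute dist_of_real dist_real_def mem_ball)
      then have "0 < Re (g z + of_real (c n) * \<Psi> z)"
        unfolding zx using g_nonneg \<Psi>_pos c_bounds(1)[of n] by (simp add: add_nonneg_pos)
      with \<open>g z + of_real (c n) * \<Psi> z = 0\<close> show False by simp
    qed
    show "(\<lambda>z. g z + of_real (c n) * \<Psi> z) holomorphic_on ball (of_real x0) r" for n
      using g \<Psi> by (intro holomorphic_intros) (auto elim: holomorphic_on_subset)
  qed (use g nonconst r in \<open>auto elim: holomorphic_on_subset\<close>)
  with zero show False by simp
qed

lemma polya_integral_zero_not_local_min:
  assumes \<omega>: "polya_weight \<omega>" and h: "continuous_on {0..pi/2} h" and c0: "0 < c0"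
    and perturbed: "\<And>c. 0 \<le> c \<Longrightarrow> c \<le> c0 \<Longrightarrow> polya_weight (\<lambda>\<theta>. \<omega> \<theta> + c * h \<theta>)"
    and zero: "polya_integral \<omega> (of_real x) = 0"
    and h_pos: "0 < Re (polya_integral h (of_real x))"
    and nonneg: "eventually (\<lambda>y. 0 \<le> Re (polya_integral \<omega> (of_real y))) (nhds x)"
  shows False
proof -
  have cont_\<omega>: "continuous_on {0..pi/2} \<omega>" using \<omega> by (simp add: polya_weight_def)
  have sum_eq: "polya_integral (\<lambda>\<theta>. \<omega> \<theta> + c * h \<theta>) = (\<lambda>w. polya_integral \<omega> w + of_real c * polya_integral h w)" for c
    using polya_integral_add_scaled[OF cont_\<omega> h] by blast
  have hol_\<omega>: "polya_integral \<omega> holomorphic_on UNIV" by (rule polya_integral_holomorphic[OF \<omega>])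
  have "polya_integral h = (\<lambda>w. (polya_integral (\<lambda>\<theta>. \<omega> \<theta> + c0 * h \<theta>) w - polya_integral \<omega> w) / of_real c0)"
    using c0 unfolding sum_eq by (auto simp: fun_eq_iff)
  then have hol_h: "polya_integral h holomorphic_on UNIV"
    using hol_\<omega> polya_integral_holomorphic[OF perturbed[of c0]] c0 by (auto intro!: holomorphic_intros)
  have "isCont (polya_integral h) (of_real x)"
    using holomorphic_on_imp_continuous_on[OF hol_h] by (simp add: continuous_on_eq_continuous_at)
  moreover have "isCont complex_of_real x" by (intro continuous_intros)
  ultimately have "isCont (\<lambda>y. Re (polya_integral h (of_real y))) x"
    using isCont_o2 by (intro isCont_Re) blast
  then have "((\<lambda>y. Re (polya_integral h (of_real y))) \<longlongrightarrow> Re (polya_integral h (of_real x))) (nhds x)"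
    using tendsto_at_iff_tendsto_nhds[where g="\<lambda>y. Re (polya_integral h (of_real y))"]
    unfolding isCont_def by blast
  then have "eventually (\<lambda>y. 0 < Re (polya_integral h (of_real y))) (nhds x)"
    using h_pos by (rule order_tendstoD(1))
  with nonneg have "eventually (\<lambda>y. 0 \<le> Re (polya_integral \<omega> (of_real y)) \<and> 0 < Re (polya_integral h (of_real y))) (nhds x)"
    by (rule eventually_conj)
  then obtain r where r: "0 < r"
      "\<And>y. \<bar>y - x\<bar> < r \<Longrightarrow> 0 \<le> Re (polya_integral \<omega> (of_real y)) \<and> 0 < Re (polya_integral h (of_real y))"
    unfolding eventually_nhds_metric dist_real_def by blast
  show False
  proof (rule hurwitz_real_perturbation[OF hol_\<omega> hol_h zero r(1) c0])
    show "Im z = 0" if "0 < c" "c \<le> c0" "polya_integral \<omega> z + of_real c * polya_integral h z = 0" for c z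
      using polya_integral_zero_imp_real[OF perturbed[of c]] that unfolding sum_eq by simp
    show "\<not> polya_integral \<omega> constant_on ball (of_real x) r"
      using r(1) by (intro polya_integral_not_constant_on[OF \<omega>]) auto
  qed (use r in auto)
qed

lemma polya_const_pos: "\<bar>\<nu>\<bar> < 1 \<Longrightarrow> 0 < polya_const \<nu>"
  unfolding polya_const_def using cos_mult_half_pi_pos[of \<nu>] by (simp add: abs_square_less_1)

lemma polya_integral_cos_of_real:
  assumes "\<bar>\<nu>\<bar> < 1"
  shows "polya_integral (\<lambda>\<theta>. cos (\<nu> * \<theta>)) (of_real y) = of_real (polya_const \<nu> * y * hyp_real \<nu> (- (y\<^sup>2) / 4))"
  using polya_integral_cos_eq_hyp[OF assms, of "of_real y"] hyp_of_real[OF assms, of "- (y\<^sup>2) / 4"] by simp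

lemma polya_integral_cos_nonneg_near_double_zero:
  assumes \<nu>: "\<bar>\<nu>\<bar> < 1" and x: "0 < x"
    and zero: "hyp_real \<nu> (- (x\<^sup>2) / 4) = 0" "hyp_real' \<nu> (- (x\<^sup>2) / 4) = 0"
  shows "eventually (\<lambda>y. 0 \<le> Re (polya_integral (\<lambda>\<theta>. cos (\<nu> * \<theta>)) (of_real y))) (nhds x)"
proof -
  have "eventually (\<lambda>r. 0 \<le> hyp_real \<nu> r) (nhds (- (x\<^sup>2) / 4))"
    using x by (intro hyp_real_nonneg_near_double_zero[OF \<nu> _ zero]) simp
  moreover have "filterlim (\<lambda>y. - (y\<^sup>2) / 4) (nhds (- (x\<^sup>2) / 4)) (nhds x)"
    by (intro tendsto_intros filterlim_ident) simp
  ultimately have "eventually (\<lambda>y. 0 \<le> hyp_real \<nu> (- (y\<^sup>2) / 4)) (nhds x)"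
    by (rule eventually_compose_filterlim)
  moreover have "eventually (\<lambda>y. 0 < y) (nhds x)"
    using x by (rule order_tendstoD(1)[OF filterlim_ident])
  ultimately show ?thesis
    unfolding polya_integral_cos_of_real[OF \<nu>]
    by eventually_elim (use polya_const_pos[OF \<nu>] in simp)
qed

text \<open>The perturbation \<open>sin \<theta>\<close> fails when \<open>cos x = 1\<close>, as its Polya integral vanishes at \<open>x\<close>;
  then \<open>- cos\<^sup>2 \<theta> sin \<theta>\<close> is used instead.\<close>

lemma hyp_real_no_double_zero:
  assumes \<nu>: "\<bar>\<nu>\<bar> < 1" and x: "0 < x"
    and zero: "hyp_real \<nu> (- (x\<^sup>2) / 4) = 0" "hyp_real' \<nu> (- (x\<^sup>2) / 4) = 0"
  shows False
proof -
  define \<omega> where "\<omega> \<theta> = cos (\<nu> * \<theta>)" for \<theta> :: real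
  have \<omega>: "polya_weight \<omega>" unfolding \<omega>_def by (rule polya_weight_cos[OF \<nu>])
  have g_zero: "polya_integral \<omega> (of_real x) = 0"
    unfolding \<omega>_def polya_integral_cos_of_real[OF \<nu>] zero by simp
  have g_nonneg: "eventually (\<lambda>y. 0 \<le> Re (polya_integral \<omega> (of_real y))) (nhds x)"
    unfolding \<omega>_def by (rule polya_integral_cos_nonneg_near_double_zero[OF \<nu> x zero])
  show False
  proof (cases "cos x = 1")
    case False
    then have "cos x < 1" using cos_le_one[of x] by linarith
    have "polya_integral sin (of_real x) = of_real ((1 - cos x) / x)"
      using integral_sin_mult_sin_cos[of x] x polya_integral_of_real[of sin x]
      by (simp add: continuous_on_sin continuous_on_id)
    then have "0 < Re (polya_integral sin (of_real x))" using \<open>cos x < 1\<close> x by simp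
    moreover have "continuous_on {0..pi/2} sin" by (intro continuous_intros)
    ultimately show False
      using polya_integral_zero_not_local_min[OF \<omega> _ zero_less_one polya_weight_add_sin[OF \<omega>] g_zero _ g_nonneg]
      by blast
  next
    case True
    define h where "h \<theta> = - ((cos \<theta>)\<^sup>2 * sin \<theta>)" for \<theta> :: real
    have h: "continuous_on {0..pi/2} h" unfolding h_def by (intro continuous_intros)
    have "polya_integral h (of_real x) = of_real (1 / x)"
      using integral_cos_sq_sin_mult_sin_cos[of x] x True polya_integral_of_real[OF h, of x]
      unfolding h_def by simp
    then have h_pos: "0 < Re (polya_integral h (of_real x))" using x by simp
    have c0: "0 < cos (\<nu> * pi / 2) / 2" using cos_mult_half_pi_pos[OF \<nu>] by simp
    have "polya_weight (\<lambda>\<theta>. \<omega> \<theta> + c * h \<theta>)" if "0 \<le> c" "c \<le> cos (\<nu> * pi / 2) / 2" for c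
      using polya_weight_cos_minus[OF \<nu> that] unfolding \<omega>_def h_def .
    then show False
      by (rule polya_integral_zero_not_local_min[OF \<omega> h c0 _ g_zero h_pos g_nonneg])
  qed
qed

section \<open>Location of the zeros\<close>

lemma hyp_0: "\<bar>\<nu>\<bar> < 1 \<Longrightarrow> hyp \<nu> 0 = 1"
  using hyp_sums[of \<nu> 0] powser_sums_zero[of "\<lambda>n. of_real (hyp_coeff \<nu> n)"] by (simp add: sums_unique2)

lemma hyp_zeroE:
  assumes \<nu>: "\<bar>\<nu>\<bar> < 1" and zero: "hyp \<nu> z = 0"
  obtains x where "pi < x" "z = of_real (- (x\<^sup>2) / 4)"
proof -
  define \<omega> where "\<omega> \<theta> = cos (\<nu> * \<theta>)" for \<theta> :: real
  have \<omega>: "polya_weight \<omega>" unfolding \<omega>_def by (rule polya_weight_cos[OF \<nu>])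
  define w where "w = csqrt (- 4 * z)"
  have z: "z = - (w\<^sup>2) / 4" unfolding w_def by simp
  have "w \<noteq> 0" using zero hyp_0[OF \<nu>] z by auto
  have "polya_integral \<omega> w = 0"
    unfolding \<omega>_def polya_integral_cos_eq_hyp[OF \<nu>] using zero z by simp
  then have "Im w = 0" by (rule polya_integral_zero_imp_real[OF \<omega>])
  then have w_eq: "w = of_real (Re w)" by (simp add: complex_eq_iff)
  have "0 < Re w"
    using csqrt_principal[of "- 4 * z"] \<open>w \<noteq> 0\<close> \<open>Im w = 0\<close> unfolding w_def by (auto simp: complex_eq_iff)
  moreover have "\<not> Re w \<le> pi"
    using polya_integral_pos[OF \<omega> \<open>0 < Re w\<close>] \<open>polya_integral \<omega> w = 0\<close> w_eq by auto
  moreover have "z = of_real (- ((Re w)\<^sup>2) / 4)" using z w_eq by (metis of_real_divide of_real_minus of_real_numeral of_real_power)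
  ultimately show ?thesis by (intro that[of "Re w"]) simp_all
qed

lemma pi_multiple_bracket:
  assumes "pi < x"
  obtains k :: nat where "1 \<le> k" "pi * real k \<le> x" "x \<le> pi * (real k + 1)"
proof
  define k where "k = nat \<lfloor>x / pi\<rfloor>"
  have "1 \<le> x / pi" using assms by simp
  then have fl: "1 \<le> \<lfloor>x / pi\<rfloor>" by linarith
  then have "0 \<le> \<lfloor>x / pi\<rfloor>" by linarith
  then have k: "real k = of_int \<lfloor>x / pi\<rfloor>" unfolding k_def by (rule of_nat_nat)
  show "1 \<le> k" using fl unfolding k_def by linarith
  show "pi * real k \<le> x" "x \<le> pi * (real k + 1)"
    using k floor_divide_lower[OF pi_gt_zero, of x] floor_divide_upper[OF pi_gt_zero, of x]
    by (simp_all add: mult.commute)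
qed

theorem mainTheorem5:
  fixes \<nu> :: real
  assumes "\<bar>\<nu>\<bar> < 1"
  defines "F \<equiv> (\<lambda>z. hyp1F2 1 (complex_of_real ((3 - \<nu>) / 2)) (complex_of_real ((3 + \<nu>) / 2)) z)"
  shows "\<forall>z. F z = 0 \<longrightarrow>
           z \<in> \<real> \<and> Re z < 0 \<and> deriv F z \<noteq> 0 \<and>
           (\<exists>k::nat. k \<ge> 1 \<and> - (pi^2 * (real k + 1)^2 / 4) \<le> Re z \<and> Re z \<le> - (pi^2 * (real k)^2 / 4))"
proof (intro allI impI)
  fix z assume "F z = 0"
  have F: "F = hyp \<nu>" unfolding F_def hyp_def ..
  obtain x where x: "pi < x" and z: "z = of_real (- (x\<^sup>2) / 4)"
    using hyp_zeroE[OF assms(1)] \<open>F z = 0\<close> unfolding F by blast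
  have "hyp_real \<nu> (- (x\<^sup>2) / 4) = 0"
    using \<open>F z = 0\<close> unfolding F z by (simp only: hyp_of_real[OF assms(1)] of_real_eq_0_iff)
  moreover have "0 < x" using x pi_gt_zero by linarith
  ultimately have "hyp_real' \<nu> (- (x\<^sup>2) / 4) \<noteq> 0" using hyp_real_no_double_zero[OF assms(1)] by blast
  then have "deriv F z \<noteq> 0"
    unfolding F z by (simp only: deriv_hyp_of_real[OF assms(1)] of_real_eq_0_iff not_False_eq_True)
  moreover obtain k :: nat where "1 \<le> k" "pi * real k \<le> x" "x \<le> pi * (real k + 1)"
    using pi_multiple_bracket[OF x] .
  then have "(pi * real k)\<^sup>2 \<le> x\<^sup>2" "x\<^sup>2 \<le> (pi * (real k + 1))\<^sup>2"
    using \<open>0 < x\<close> by (auto intro!: power_mono)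
  ultimately show "z \<in> \<real> \<and> Re z < 0 \<and> deriv F z \<noteq> 0 \<and>
           (\<exists>k::nat. k \<ge> 1 \<and> - (pi^2 * (real k + 1)^2 / 4) \<le> Re z \<and> Re z \<le> - (pi^2 * (real k)^2 / 4))"
    using z x \<open>1 \<le> k\<close> pi_gt_zero by (auto simp: power_mult_distrib intro!: exI[of _ k])
qed

end
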